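(* In $Y_R(\mathfrak{so}_3)$: $$[e_{-1,0}(u),e_{-1,0}(v)]=\frac12\,\frac{\big(e_{-1,0}(u)-e_{-1,0}(v)\big)^2}{u-v},\qquad [f_{0,-1}(u),f_{0,-1}(v)]=-\frac12\,\frac{\big(f_{0,-1}(u)-f_{0,-1}(v)\big)^2}{u-v}.$$
   Context: Let $e_{ij}$ ($i,j\in\{-1,0,1\}$) be the matrix units of $\mathrm{End}\,\mathbb{C}^3$, with rows and columns indexed by $-1,0,1$. Let $P=\sum_{i,j}e_{ij}\otimes e_{ji}$, $Q=\sum_{i,j}e_{ij}\otimes e_{-i,-j}$ and $R(u)=1-\frac{P}{u}+\frac{Q}{u-\frac12}$. Let $t$ be the transposition on $\mathrm{End}\,\mathbb{C}^3$ given by $(e_{ij})^t=e_{-j,-i}$. The algebra $Y_R(\mathfrak{so}_3)$ is the unital associative algebra over $\mathbb{C}$ generated by elements $t_{ij}^{(r)}$, $r\ge 1$, $i,j\in\{-1,0,1\}$; put $t_{ij}(u)=\delta_{ij}+\sum_{r\ge1}t^{(r)}_{ij}u^{-r}$, $T(u)=\sum_{i,j}t_{ij}(u)\otimes e_{ij}$, $T^t(u)=\sum_{i,j}t_{ij}(u)\otimes e_{-j,-i}$, $T_1(u)=\sum t_{ij}(u)\otimes e_{ij}\otimes 1$, $T_2(v)=\sum t_{ij}(v)\otimes 1\otimes e_{ij}$. The defining relations are $R(u-v)T_1(u)T_2(v)=T_2(v)T_1(u)R(u-v)$ and $T(u)T^t(u+\frac12)=T^t(u+\frac12)T(u)=1$.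 The Gauss generators are the unique series $k_i(u)\in 1+u^{-1}Y_R(\mathfrak{so}_3)[[u^{-1}]]$ ($i=-1,0,1$) and $e_{ij}(u),f_{ji}(u)\in u^{-1}Y_R(\mathfrak{so}_3)[[u^{-1}]]$ ($-1\le i<j\le1$) such that $T(u)=F(u)K(u)E(u)$, where $F(u)$ is the lower unitriangular matrix with below-diagonal entries $F_{0,-1}=f_{0,-1}(u)$, $F_{1,-1}=f_{1,-1}(u)$, $F_{1,0}=f_{1,0}(u)$, $K(u)=\mathrm{diag}(k_{-1}(u),k_0(u),k_1(u))$, and $E(u)$ is the upper unitriangular matrix with above-diagonal entries $E_{-1,0}=e_{-1,0}(u)$, $E_{-1,1}=e_{-1,1}(u)$, $E_{0,1}=e_{01}(u)$ (rows/columns indexed by $-1,0,1$). *)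

theory Defs
  imports Complex_Main "HOL-Library.Function_Algebras"
begin

text \<open>A complex algebra: a unital ring with a central unital ring homomorphism from the complex numbers.\<close>
definition calg :: "(complex \<Rightarrow> 'a::ring_1) \<Rightarrow> bool" where
  "calg \<phi> \<longleftrightarrow> \<phi> 1 = 1 \<and> (\<forall>x y. \<phi> (x + y) = \<phi> x + \<phi> y)
     \<and> (\<forall>x y. \<phi> (x * y) = \<phi> x * \<phi> y) \<and> (\<forall>c a. \<phi> c * a = a * \<phi> c)"

definition idx :: "int set" where "idx = {-1, 0, 1}"

text \<open>One-variable formal series in u^-1: n maps to the coefficient of u^-n.\<close>
definition ser1_one :: "nat \<Rightarrow> 'a::{zero,one}" where
  "ser1_one n = (if n = 0 then 1 else 0)"

definition cmul1 :: "(nat \<Rightarrow> 'a::{comm_monoid_add,times}) \<Rightarrow> (nat \<Rightarrow> 'a) \<Rightarrow> nat \<Rightarrow> 'a" where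
  "cmul1 a b n = (\<Sum>p\<le>n. a p * b (n - p))"

text \<open>Substitution u to u+1/2: (u+1/2)^-r = sum over k of (-r choose k) (1/2)^k u^(-r-k).\<close>
definition shift_half :: "(complex \<Rightarrow> 'a::ring_1) \<Rightarrow> (nat \<Rightarrow> 'a) \<Rightarrow> nat \<Rightarrow> 'a" where
  "shift_half \<phi> c n = (\<Sum>r\<le>n. \<phi> (((- of_nat r) gchoose (n - r)) * (1/2) ^ (n - r)) * c r)"

text \<open>Two-variable series: A m n is the coefficient of u^-m v^-n (m, n integers).\<close>
definition ser_u :: "(nat \<Rightarrow> 'a::zero) \<Rightarrow> int \<Rightarrow> int \<Rightarrow> 'a" where
  "ser_u a = (\<lambda>m n. if 0 \<le> m \<and> n = 0 then a (nat m) else 0)"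

definition ser_v :: "(nat \<Rightarrow> 'a::zero) \<Rightarrow> int \<Rightarrow> int \<Rightarrow> 'a" where
  "ser_v a = (\<lambda>m n. if m = 0 \<and> 0 \<le> n then a (nat n) else 0)"

text \<open>Product of series supported in nonnegative exponents of u^-1, v^-1.\<close>
definition cmul2 :: "(int \<Rightarrow> int \<Rightarrow> 'a::{comm_monoid_add,times}) \<Rightarrow> (int \<Rightarrow> int \<Rightarrow> 'a) \<Rightarrow> int \<Rightarrow> int \<Rightarrow> 'a" where
  "cmul2 A B = (\<lambda>m n. \<Sum>p\<in>{0..m}. \<Sum>q\<in>{0..n}. A p q * B (m - p) (n - q))"

text \<open>Multiplication by (u - v).\<close>
definition mul_umv :: "(int \<Rightarrow> int \<Rightarrow> 'a::ab_group_add) \<Rightarrow> int \<Rightarrow> int \<Rightarrow> 'a" where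
  "mul_umv A = (\<lambda>m n. A (m + 1) n - A m (n + 1))"

definition scal2 :: "(complex \<Rightarrow> 'a::ring_1) \<Rightarrow> complex \<Rightarrow> (int \<Rightarrow> int \<Rightarrow> 'a) \<Rightarrow> int \<Rightarrow> int \<Rightarrow> 'a" where
  "scal2 \<phi> c A = (\<lambda>m n. \<phi> c * A m n)"

text \<open>Multiplication by (u - v - 1/2).\<close>
definition mul_umvh :: "(complex \<Rightarrow> 'a::ring_1) \<Rightarrow> (int \<Rightarrow> int \<Rightarrow> 'a) \<Rightarrow> int \<Rightarrow> int \<Rightarrow> 'a" where
  "mul_umvh \<phi> A = mul_umv A - scal2 \<phi> (1/2) A"

text \<open>RTT relation, multiplied by (u-v)(u-v-1/2), entry ((i,k),(j,l)).\<close>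
definition rtt_rel :: "(complex \<Rightarrow> 'a::ring_1) \<Rightarrow> (int \<Rightarrow> int \<Rightarrow> nat \<Rightarrow> 'a) \<Rightarrow> bool" where
  "rtt_rel \<phi> t \<longleftrightarrow> (\<forall>i\<in>idx. \<forall>j\<in>idx. \<forall>k\<in>idx. \<forall>l\<in>idx.
     mul_umv (mul_umvh \<phi> (cmul2 (ser_u (t i j)) (ser_v (t k l))))
       - mul_umvh \<phi> (cmul2 (ser_u (t k j)) (ser_v (t i l)))
       + (if k = - i then mul_umv (\<Sum>a\<in>idx. cmul2 (ser_u (t a j)) (ser_v (t (- a) l))) else 0)
     = mul_umv (mul_umvh \<phi> (cmul2 (ser_v (t k l)) (ser_u (t i j))))
       - mul_umvh \<phi> (cmul2 (ser_v (t k j)) (ser_u (t i l)))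
       + (if l = - j then mul_umv (\<Sum>a\<in>idx. cmul2 (ser_v (t k (- a))) (ser_u (t i a))) else 0))"

text \<open>T(u) T^t(u+1/2) = T^t(u+1/2) T(u) = 1, with (T^t)_ab = t_{-b,-a}.\<close>
definition unitary_rel :: "(complex \<Rightarrow> 'a::ring_1) \<Rightarrow> (int \<Rightarrow> int \<Rightarrow> nat \<Rightarrow> 'a) \<Rightarrow> bool" where
  "unitary_rel \<phi> t \<longleftrightarrow> (\<forall>i\<in>idx. \<forall>j\<in>idx.
     (\<Sum>a\<in>idx. cmul1 (t i a) (shift_half \<phi> (t (- j) (- a)))) = (if i = j then ser1_one else 0)
   \<and> (\<Sum>a\<in>idx. cmul1 (shift_half \<phi> (t (- a) (- i))) (t a j)) = (if i = j then ser1_one else 0))"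

text \<open>t i j r is the image of t_ij^(r) (r \<ge> 1); t i j 0 is the constant term delta_ij.\<close>
definition yangian_so3 :: "(complex \<Rightarrow> 'a::ring_1) \<Rightarrow> (int \<Rightarrow> int \<Rightarrow> nat \<Rightarrow> 'a) \<Rightarrow> bool" where
  "yangian_so3 \<phi> t \<longleftrightarrow> (\<forall>i\<in>idx. \<forall>j\<in>idx. t i j 0 = (if i = j then 1 else 0))
     \<and> rtt_rel \<phi> t \<and> unitary_rel \<phi> t"

definition Fmat :: "(int \<Rightarrow> int \<Rightarrow> nat \<Rightarrow> 'a::{zero,one}) \<Rightarrow> int \<Rightarrow> int \<Rightarrow> nat \<Rightarrow> 'a" where
  "Fmat f i a = (if a = i then ser1_one else if a < i then f i a else (\<lambda>_. 0))"

definition Emat :: "(int \<Rightarrow> int \<Rightarrow> nat \<Rightarrow> 'a::{zero,one}) \<Rightarrow> int \<Rightarrow> int \<Rightarrow> nat \<Rightarrow> 'a" where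
  "Emat e a j = (if a = j then ser1_one else if a < j then e a j else (\<lambda>_. 0))"

definition gauss_decomp :: "(int \<Rightarrow> int \<Rightarrow> nat \<Rightarrow> 'a::ring_1) \<Rightarrow> (int \<Rightarrow> int \<Rightarrow> nat \<Rightarrow> 'a)
    \<Rightarrow> (int \<Rightarrow> nat \<Rightarrow> 'a) \<Rightarrow> (int \<Rightarrow> int \<Rightarrow> nat \<Rightarrow> 'a) \<Rightarrow> bool" where
  "gauss_decomp t f k e \<longleftrightarrow> (\<forall>a\<in>idx. k a 0 = 1)
     \<and> (\<forall>i\<in>idx. \<forall>j\<in>idx. i < j \<longrightarrow> e i j 0 = 0 \<and> f j i 0 = 0)
     \<and> (\<forall>i\<in>idx. \<forall>j\<in>idx. t i j = (\<Sum>a\<in>idx. cmul1 (cmul1 (Fmat f i a) (k a)) (Emat e a j)))"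

end

theory Submission
  imports Defs "HOL-Computational_Algebra.Formal_Power_Series"
begin

text \<open>Only row \<open>-1\<close> of \<open>T(u) = F(u) K(u) E(u)\<close> is needed: it is \<open>k(u) (1, e(u), g(u))\<close> with
  \<open>k = k\<^sub>-\<^sub>1\<close>, \<open>e = e\<^sub>-\<^sub>1\<^sub>0\<close>, \<open>g = e\<^sub>-\<^sub>1\<^sub>1\<close>. Cleared of denominators, the RTT relations with \<open>i = k = -1\<close>
  become identities between the series \<open>k, e, g\<close> in \<open>u\<close> and in \<open>v\<close>. The \<open>(-1,-1)\<close> relation makes
  \<open>k(u)\<close> and \<open>k(v)\<close> commute, the \<open>(-1,0)\<close> and \<open>(0,-1)\<close> relations give exchange relations between
  \<open>e\<close> and \<open>k\<close>, and the \<open>(-1,1)\<close>, \<open>(1,-1)\<close> relations specialised at \<open>v = u - 1\<close> give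
  \<open>2 g(u) + e(u)\<^sup>2 = 0\<close>. With these, the \<open>(0,0)\<close> relation, after cancelling the invertible factors
  \<open>k(u), k(v)\<close> and \<open>u - v - c\<close>, is the claimed commutator relation for \<open>e\<close>. Every step is an identity in a
  noncommutative ring with central complex coefficients; such identities are checked by normalising
  noncommutative polynomials. The relation for \<open>f\<^sub>0\<^sub>,\<^sub>-\<^sub>1\<close> is the same argument for the column
  \<open>t\<^sub>j\<^sub>,\<^sub>-\<^sub>1\<close> in the opposite algebra.\<close>

unbundle fps_syntax

lemma
  assumes "calg \<phi>"
  shows calg_one: "\<phi> 1 = 1"
    and calg_add: "\<phi> (x + y) = \<phi> x + \<phi> y"
    and calg_mult: "\<phi> (x * y) = \<phi> x * \<phi> y"
    and calg_commute: "\<phi> c * a = a * \<phi> c"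
  using assms unfolding calg_def by blast+

lemma calg_zero: "calg \<phi> \<Longrightarrow> \<phi> 0 = 0"
  using calg_add[of \<phi> 0 0] by simp

lemma calg_uminus: "calg \<phi> \<Longrightarrow> \<phi> (- x) = - \<phi> x"
  using calg_add[of \<phi> "- x" x] calg_zero[of \<phi>] by (simp add: eq_neg_iff_add_eq_0)

lemma calg_diff: "calg \<phi> \<Longrightarrow> \<phi> (x - y) = \<phi> x - \<phi> y"
  using calg_add[of \<phi> x "- y"] calg_uminus[of \<phi> y] by simp

lemmas calg_simps = calg_one calg_add calg_mult calg_zero calg_uminus calg_diff

lemma calg_sum: "calg \<phi> \<Longrightarrow> \<phi> (sum f S) = (\<Sum>i\<in>S. \<phi> (f i))"
  by (induction S rule: infinite_finite_induct) (auto simp: calg_simps)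

subsection \<open>Power series over a noncommutative ring\<close>

lemma fps_mult_commute_of_central:
  fixes f g :: "'a::ring_1 fps"
  assumes "\<And>i a. f $ i * a = a * f $ i"
  shows "f * g = g * f"
proof (rule fps_ext)
  fix n
  have "(f * g) $ n = (\<Sum>i=0..n. g $ (n - i) * f $ i)"
    by (simp add: fps_mult_nth assms)
  also have "\<dots> = (\<Sum>i=0..n. g $ i * f $ (n - i))"
    by (subst sum.atLeastAtMost_rev) (auto intro: sum.cong)
  finally show "(f * g) $ n = (g * f) $ n" by (simp add: fps_mult_nth)
qed

lemma fps_left_cancel:
  fixes f A :: "'a::ring_1 fps"
  assumes "x * f $ 0 = 1" and "f * A = 0"
  shows "A = 0"
proof -
  have "A = (fps_left_inverse f x * f) * A" by (simp add: fps_left_inverse[OF assms(1)])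
  also have "\<dots> = 0" by (simp add: mult.assoc assms(2))
  finally show ?thesis .
qed

lemma fps_X_left_cancel: "fps_X * A = (0 :: 'a::ring_1 fps) \<Longrightarrow> A = 0"
  using fps_mult_fps_X_nonzero(1) by blast

definition fps_map :: "('a \<Rightarrow> 'b) \<Rightarrow> 'a::zero fps \<Rightarrow> 'b::zero fps" where
  "fps_map \<phi> f = Abs_fps (\<lambda>n. \<phi> (f $ n))"

definition fps2_map :: "('a \<Rightarrow> 'b) \<Rightarrow> 'a::zero fps fps \<Rightarrow> 'b::zero fps fps" where
  "fps2_map \<phi> F = Abs_fps (\<lambda>n. fps_map \<phi> (F $ n))"

lemma fps_map_nth [simp]: "fps_map \<phi> f $ n = \<phi> (f $ n)"
  by (simp add: fps_map_def)

lemma fps2_map_nth [simp]: "fps2_map \<phi> F $ n = fps_map \<phi> (F $ n)"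
  by (simp add: fps2_map_def)

lemma fps_map_add: "calg \<phi> \<Longrightarrow> fps_map \<phi> (f + g) = fps_map \<phi> f + fps_map \<phi> g"
  by (rule fps_ext) (simp add: calg_simps)

lemma fps_map_mult: "calg \<phi> \<Longrightarrow> fps_map \<phi> (f * g) = fps_map \<phi> f * fps_map \<phi> g"
  by (rule fps_ext) (simp add: calg_simps fps_mult_nth calg_sum)

lemma fps_map_one: "calg \<phi> \<Longrightarrow> fps_map \<phi> 1 = 1"
  by (rule fps_ext) (simp add: calg_simps fps_one_nth)

lemma fps_map_zero: "calg \<phi> \<Longrightarrow> fps_map \<phi> 0 = 0"
  by (rule fps_ext) (simp add: calg_simps)

lemma fps_map_central: "calg \<phi> \<Longrightarrow> fps_map \<phi> f * A = A * fps_map \<phi> f"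
  by (rule fps_mult_commute_of_central) (simp add: calg_commute)

lemma fps_map_sum: "calg \<phi> \<Longrightarrow> fps_map \<phi> (sum f S) = (\<Sum>i\<in>S. fps_map \<phi> (f i))"
  by (induction S rule: infinite_finite_induct) (simp_all add: fps_map_add fps_map_zero)

lemma fps_map_power: "calg \<phi> \<Longrightarrow> fps_map \<phi> (f ^ n) = fps_map \<phi> f ^ n"
  by (induction n) (simp_all add: fps_map_one fps_map_mult)

lemma fps_map_X: "calg \<phi> \<Longrightarrow> fps_map \<phi> fps_X = fps_X"
  by (rule fps_ext) (simp add: fps_X_def calg_simps)

lemma fps2_map_add: "calg \<phi> \<Longrightarrow> fps2_map \<phi> (F + G) = fps2_map \<phi> F + fps2_map \<phi> G"
  by (rule fps_ext) (simp add: fps_map_add)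

lemma fps2_map_mult: "calg \<phi> \<Longrightarrow> fps2_map \<phi> (F * G) = fps2_map \<phi> F * fps2_map \<phi> G"
  by (rule fps_ext) (simp add: fps_mult_nth fps_map_mult fps_map_sum)

lemma fps2_map_one: "calg \<phi> \<Longrightarrow> fps2_map \<phi> 1 = 1"
  by (rule fps_ext) (simp add: fps_map_one fps_map_zero fps_one_nth)

lemma fps2_map_central: "calg \<phi> \<Longrightarrow> fps2_map \<phi> F * A = A * fps2_map \<phi> F"
  by (rule fps_mult_commute_of_central) (simp add: fps_map_central)

lemma fps2_map_const: "calg \<phi> \<Longrightarrow> fps2_map \<phi> (fps_const (fps_const c)) = fps_const (fps_const (\<phi> c))"
  by (rule fps_ext, rule fps_ext) (simp add: calg_simps)

text \<open>In \<open>'a fps fps\<close> the inner variable stands for \<open>u\<^sup>-\<^sup>1\<close> and the outer one for \<open>v\<^sup>-\<^sup>1\<close>.\<close>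

abbreviation Xu :: "'a::ring_1 fps fps" where "Xu \<equiv> fps_const fps_X"
abbreviation Xv :: "'a::ring_1 fps fps" where "Xv \<equiv> fps_X"

definition fps_u :: "(nat \<Rightarrow> 'a::ring_1) \<Rightarrow> 'a fps fps" where
  "fps_u a = fps_const (Abs_fps a)"

definition fps_v :: "(nat \<Rightarrow> 'a::ring_1) \<Rightarrow> 'a fps fps" where
  "fps_v a = Abs_fps (\<lambda>n. fps_const (a n))"

lemma fps_u_nth [simp]: "fps_u a $ n $ m = (if n = 0 then a m else 0)"
  by (simp add: fps_u_def)

lemma fps_v_nth [simp]: "fps_v a $ n $ m = (if m = 0 then a n else 0)"
  by (simp add: fps_v_def)

lemma fps_u_add: "fps_u (a + b) = fps_u a + fps_u b"
  by (rule fps_ext, rule fps_ext) simp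

lemma fps_v_add: "fps_v (a + b) = fps_v a + fps_v b"
  by (rule fps_ext, rule fps_ext) simp

lemma fps_u_zero: "fps_u 0 = 0"
  by (rule fps_ext, rule fps_ext) simp

lemma fps_v_zero: "fps_v 0 = 0"
  by (rule fps_ext, rule fps_ext) simp

lemma Abs_fps_cmul1: "Abs_fps (cmul1 a b) = Abs_fps a * Abs_fps b"
  by (rule fps_ext) (simp add: cmul1_def fps_mult_nth atLeast0AtMost)

lemma fps_u_cmul1: "fps_u (cmul1 a b) = fps_u a * fps_u b"
  by (simp add: fps_u_def Abs_fps_cmul1)

lemma fps_const_sum: "fps_const (sum f S) = (\<Sum>i\<in>S. fps_const (f i))"
  by (induction S rule: infinite_finite_induct) (simp_all flip: fps_const_add)

lemma fps_v_cmul1: "fps_v (cmul1 a b) = fps_v a * fps_v b"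
proof (rule fps_ext)
  fix n
  have "(fps_v a * fps_v b) $ n = (\<Sum>i=0..n. fps_const (a i * b (n - i)))"
    by (simp add: fps_mult_nth fps_v_def)
  also have "\<dots> = fps_const (cmul1 a b n)"
    by (simp add: cmul1_def atLeast0AtMost fps_const_sum)
  finally show "fps_v (cmul1 a b) $ n = (fps_v a * fps_v b) $ n" by (simp add: fps_v_def)
qed

text \<open>A two-variable series supported in indices \<open>m, n \<ge> -s\<close> becomes a power series after
  multiplication by \<open>(u\<^sup>-\<^sup>1 v\<^sup>-\<^sup>1)\<^sup>s\<close>.\<close>

definition grid_supported :: "int \<Rightarrow> (int \<Rightarrow> int \<Rightarrow> 'a::zero) \<Rightarrow> bool" where
  "grid_supported s A \<longleftrightarrow> (\<forall>m n. m < -s \<or> n < -s \<longrightarrow> A m n = 0)"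

definition fps2_of_grid :: "int \<Rightarrow> (int \<Rightarrow> int \<Rightarrow> 'a::ring_1) \<Rightarrow> 'a fps fps" where
  "fps2_of_grid s A = Abs_fps (\<lambda>n. Abs_fps (\<lambda>m. A (int m - s) (int n - s)))"

lemma fps2_of_grid_nth [simp]: "fps2_of_grid s A $ n $ m = A (int m - s) (int n - s)"
  by (simp add: fps2_of_grid_def)

lemma fps2_of_grid_add: "fps2_of_grid s (A + B) = fps2_of_grid s A + fps2_of_grid s B"
  by (rule fps_ext, rule fps_ext) simp

lemma fps2_of_grid_diff: "fps2_of_grid s (A - B) = fps2_of_grid s A - fps2_of_grid s B"
  by (rule fps_ext, rule fps_ext) simp

lemma fps2_of_grid_zero: "fps2_of_grid s 0 = 0"
  by (rule fps_ext, rule fps_ext) simp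

lemma fps2_of_grid_sum: "fps2_of_grid s (sum f S) = (\<Sum>i\<in>S. fps2_of_grid s (f i))"
proof (induction S rule: infinite_finite_induct)
  case (insert x F)
  then show ?case by (metis fps2_of_grid_add sum.insert)
qed (metis fps2_of_grid_zero sum.infinite sum.empty)+

lemma fps2_of_grid_if: "fps2_of_grid s (if c then A else 0) = (if c then fps2_of_grid s A else 0)"
  by (simp add: fps2_of_grid_zero)

lemma fps2_of_grid_ser_u: "fps2_of_grid 0 (ser_u a) = fps_u a"
  by (rule fps_ext, rule fps_ext) (simp add: ser_u_def)

lemma fps2_of_grid_ser_v: "fps2_of_grid 0 (ser_v a) = fps_v a"
  by (rule fps_ext, rule fps_ext) (simp add: ser_v_def)

lemma sum_int_atLeastAtMost: "(\<Sum>p\<in>{0..int m}. f p) = (\<Sum>j=0..m. f (int j))"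
proof -
  have "{0..int m} = int ` {0..m}"
    by (auto simp: image_iff intro!: bexI[of _ "nat _"])
  then show ?thesis by (simp add: sum.reindex)
qed

lemma fps2_of_grid_cmul2: "fps2_of_grid 0 (cmul2 A B) = fps2_of_grid 0 A * fps2_of_grid 0 B"
proof (rule fps_ext, rule fps_ext)
  fix n m
  have "fps2_of_grid 0 (cmul2 A B) $ n $ m
      = (\<Sum>j=0..m. \<Sum>i=0..n. A (int j) (int i) * B (int m - int j) (int n - int i))"
    by (simp add: cmul2_def sum_int_atLeastAtMost)
  also have "\<dots> = (\<Sum>i=0..n. \<Sum>j=0..m. A (int j) (int i) * B (int m - int j) (int n - int i))"
    by (rule sum.swap)
  also have "\<dots> = (fps2_of_grid 0 A * fps2_of_grid 0 B) $ n $ m"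
    by (simp add: fps_mult_nth fps_sum_nth of_nat_diff)
  finally show "fps2_of_grid 0 (cmul2 A B) $ n $ m = (fps2_of_grid 0 A * fps2_of_grid 0 B) $ n $ m" .
qed

lemma fps2_of_grid_uv: "fps2_of_grid 0 (cmul2 (ser_u a) (ser_v b)) = fps_u a * fps_v b"
  by (simp add: fps2_of_grid_cmul2 fps2_of_grid_ser_u fps2_of_grid_ser_v)

lemma fps2_of_grid_vu: "fps2_of_grid 0 (cmul2 (ser_v a) (ser_u b)) = fps_v a * fps_u b"
  by (simp add: fps2_of_grid_cmul2 fps2_of_grid_ser_u fps2_of_grid_ser_v)

lemma grid_supported_cmul2: "grid_supported 0 (cmul2 A B)"
  by (simp add: grid_supported_def cmul2_def)

lemma grid_supported_mono: "grid_supported s A \<Longrightarrow> s \<le> t \<Longrightarrow> grid_supported t A"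
  by (simp add: grid_supported_def)

lemma grid_supported_mul_umv: "grid_supported s A \<Longrightarrow> grid_supported (s + 1) (mul_umv A)"
  by (simp add: grid_supported_def mul_umv_def)

lemma grid_supported_scal2: "grid_supported s A \<Longrightarrow> grid_supported s (scal2 \<phi> c A)"
  by (simp add: grid_supported_def scal2_def)

lemma grid_supported_diff:
  "grid_supported s A \<Longrightarrow> grid_supported s B \<Longrightarrow> grid_supported s (A - B :: int \<Rightarrow> int \<Rightarrow> 'a::ab_group_add)"
  by (simp add: grid_supported_def)

lemma grid_supported_sum:
  "(\<And>i. i \<in> S \<Longrightarrow> grid_supported s (f i)) \<Longrightarrow> grid_supported s (sum f S :: int \<Rightarrow> int \<Rightarrow> 'a::ab_group_add)"
  by (induction S rule: infinite_finite_induct) (auto simp: grid_supported_def)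

lemma fps2_of_grid_mul_umv:
  "grid_supported s A \<Longrightarrow> fps2_of_grid (s + 1) (mul_umv A) = (Xv - Xu) * fps2_of_grid s A"
  by (rule fps_ext, rule fps_ext) (auto simp: mul_umv_def algebra_simps grid_supported_def of_nat_diff)

lemma fps2_of_grid_shift:
  "grid_supported s A \<Longrightarrow> fps2_of_grid (s + 1) A = (Xu * Xv) * fps2_of_grid s A"
  by (rule fps_ext, rule fps_ext) (auto simp: mult.assoc algebra_simps grid_supported_def of_nat_diff)

lemma fps2_of_grid_scal2: "fps2_of_grid s (scal2 \<phi> c A) = fps_const (fps_const (\<phi> c)) * fps2_of_grid s A"
  by (rule fps_ext, rule fps_ext) (simp add: scal2_def)

lemma fps2_of_grid_inj:
  assumes "grid_supported s A" "grid_supported s B" "fps2_of_grid s A = fps2_of_grid s B"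
  shows "A = B"
proof (intro ext)
  fix m n
  show "A m n = B m n"
  proof (cases "m < -s \<or> n < -s")
    case True
    then show ?thesis using assms(1,2) by (auto simp: grid_supported_def)
  next
    case False
    have "fps2_of_grid s A $ nat (n + s) $ nat (m + s) = fps2_of_grid s B $ nat (n + s) $ nat (m + s)"
      using assms(3) by simp
    then show ?thesis using False by simp
  qed
qed

subsection \<open>The opposite ring\<close>

typedef 'a opp = "UNIV :: 'a set" morphisms unop op by simp

instantiation opp :: (ring_1) ring_1
begin
definition zero_opp_def: "0 = op 0"
definition one_opp_def: "1 = op 1"
definition plus_opp_def: "a + b = op (unop a + unop b)"
definition minus_opp_def: "a - b = op (unop a - unop b)"
definition uminus_opp_def: "- a = op (- unop a)"
definition times_opp_def: "a * b = op (unop b * unop a)"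
instance
proof
  fix a b c :: "'a opp"
  show "a * b * c = a * (b * c)" by (simp add: times_opp_def op_inverse mult.assoc)
  show "1 * a = a" "a * 1 = a" by (simp_all add: times_opp_def one_opp_def op_inverse unop_inverse)
  show "a + b + c = a + (b + c)" by (simp add: plus_opp_def op_inverse add.assoc)
  show "a + b = b + a" by (simp add: plus_opp_def add.commute)
  show "0 + a = a" by (simp add: plus_opp_def zero_opp_def op_inverse unop_inverse)
  show "- a + a = 0" by (simp add: plus_opp_def zero_opp_def uminus_opp_def op_inverse)
  show "a - b = a + - b" by (simp add: plus_opp_def minus_opp_def uminus_opp_def op_inverse)
  show "(a + b) * c = a * c + b * c" by (simp add: plus_opp_def times_opp_def op_inverse distrib_left)
  show "a * (b + c) = a * b + a * c" by (simp add: plus_opp_def times_opp_def op_inverse distrib_right)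
  show "(0::'a opp) \<noteq> 1" by (simp add: zero_opp_def one_opp_def op_inject)
qed
end

lemma op_add: "op (x + y) = op x + op y"
  by (simp add: plus_opp_def op_inverse)

lemma op_diff: "op (x - y) = op x - op y"
  by (simp add: minus_opp_def op_inverse)

lemma op_mult: "op (x * y) = op y * op x"
  by (simp add: times_opp_def op_inverse)

lemma op_zero: "op 0 = 0"
  by (simp add: zero_opp_def)

lemma op_one: "op 1 = 1"
  by (simp add: one_opp_def)

lemma op_sum: "op (sum f S) = (\<Sum>i\<in>S. op (f i))"
  by (induction S rule: infinite_finite_induct) (simp_all add: op_zero op_add)

lemma calg_op:
  assumes "calg \<phi>"
  shows "calg (op \<circ> \<phi>)"
  unfolding calg_def comp_def
proof (intro conjI allI)
  fix x y c :: complex and a :: "'a opp"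
  show "op (\<phi> 1) = 1" using assms by (simp add: calg_simps op_one)
  show "op (\<phi> (x + y)) = op (\<phi> x) + op (\<phi> y)" using assms by (simp add: calg_simps op_add)
  have "\<phi> (x * y) = \<phi> (y * x)" by (simp add: mult.commute)
  then show "op (\<phi> (x * y)) = op (\<phi> x) * op (\<phi> y)" using assms by (simp add: calg_simps op_mult)
  show "op (\<phi> c) * a = a * op (\<phi> c)"
    using calg_commute[OF assms, of c "unop a"] by (simp add: times_opp_def op_inverse unop_inverse)
qed

lemma op_cmul1: "op \<circ> cmul1 a b = cmul1 (op \<circ> b) (op \<circ> a)"
proof
  fix n
  have "(op \<circ> cmul1 a b) n = (\<Sum>p=0..n. op (b (n - p)) * op (a p))"
    by (simp add: cmul1_def op_sum op_mult atLeast0AtMost)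
  also have "\<dots> = (\<Sum>p=0..n. op (b p) * op (a (n - p)))"
    by (subst sum.atLeastAtMost_rev) (auto intro: sum.cong)
  finally show "(op \<circ> cmul1 a b) n = cmul1 (op \<circ> b) (op \<circ> a) n"
    by (simp add: cmul1_def atLeast0AtMost)
qed

definition fps2_op :: "'a::ring_1 fps fps \<Rightarrow> 'a opp fps fps" where
  "fps2_op F = Abs_fps (\<lambda>n. Abs_fps (\<lambda>m. op (F $ n $ m)))"

lemma fps2_op_nth [simp]: "fps2_op F $ n $ m = op (F $ n $ m)"
  by (simp add: fps2_op_def)

lemma fps2_op_add: "fps2_op (F + G) = fps2_op F + fps2_op G"
  by (rule fps_ext, rule fps_ext) (simp add: op_add)

lemma fps2_op_diff: "fps2_op (F - G) = fps2_op F - fps2_op G"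
  by (rule fps_ext, rule fps_ext) (simp add: op_diff)

lemma fps2_op_zero: "fps2_op 0 = 0"
  by (rule fps_ext, rule fps_ext) (simp add: op_zero)

lemma fps2_op_if: "fps2_op (if c then A else 0) = (if c then fps2_op A else 0)"
  by (simp add: fps2_op_zero)

lemma fps2_op_sum: "fps2_op (sum f S) = (\<Sum>i\<in>S. fps2_op (f i))"
  by (induction S rule: infinite_finite_induct) (simp_all add: fps2_op_zero fps2_op_add)

lemma fps2_op_inj: "fps2_op F = fps2_op G \<Longrightarrow> F = G"
proof (rule fps_ext, rule fps_ext)
  fix n m
  assume "fps2_op F = fps2_op G"
  then have "fps2_op F $ n $ m = fps2_op G $ n $ m" by simp
  then show "F $ n $ m = G $ n $ m" by (simp add: op_inject)
qed

lemma fps2_op_fps_u: "fps2_op (fps_u a) = fps_u (op \<circ> a)"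
  by (rule fps_ext, rule fps_ext) (simp add: op_zero)

lemma fps2_op_fps_v: "fps2_op (fps_v a) = fps_v (op \<circ> a)"
  by (rule fps_ext, rule fps_ext) (simp add: op_zero)

lemma fps2_op_fps2_map: "fps2_op (fps2_map \<phi> c) = fps2_map (op \<circ> \<phi>) c"
  by (rule fps_ext, rule fps_ext) simp

lemma fps2_op_mult: "fps2_op (F * G) = fps2_op G * fps2_op F"
proof (rule fps_ext, rule fps_ext)
  fix n m
  have "fps2_op (F * G) $ n $ m = (\<Sum>i=0..n. \<Sum>j=0..m. op (G $ (n - i) $ (m - j)) * op (F $ i $ j))"
    by (simp add: fps_mult_nth fps_sum_nth op_sum op_mult)
  also have "\<dots> = (\<Sum>i=0..n. \<Sum>j=0..m. op (G $ i $ j) * op (F $ (n - i) $ (m - j)))"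
    by (subst sum.atLeastAtMost_rev, rule sum.cong[OF refl], subst sum.atLeastAtMost_rev)
      (auto intro!: sum.cong)
  finally show "fps2_op (F * G) $ n $ m = (fps2_op G * fps2_op F) $ n $ m"
    by (simp add: fps_mult_nth fps_sum_nth)
qed

lemma fps2_op_scalar_mult:
  "calg \<phi> \<Longrightarrow> fps2_op (fps2_map \<phi> c * A) = fps2_map (op \<circ> \<phi>) c * fps2_op A"
  using fps2_map_central[OF calg_op] by (metis fps2_op_mult fps2_op_fps2_map)

subsection \<open>Normalising noncommutative polynomials with central coefficients\<close>

text \<open>A polynomial is a list of monomials \<open>(w, c)\<close>: a word \<open>w\<close> of indices into a list of atoms and a
  coefficient \<open>c\<close> from a commutative ring that is mapped centrally into the ring of the atoms.
  Ring identities are checked by comparing coefficients of words, which reduces to commutative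
  algebra on the coefficients.\<close>

definition word_prod :: "'r::ring_1 list \<Rightarrow> nat list \<Rightarrow> 'r" where
  "word_prod as w = prod_list (map ((!) as) w)"

definition ncpoly_eval :: "('c \<Rightarrow> 'r::ring_1) \<Rightarrow> 'r list \<Rightarrow> (nat list \<times> 'c) list \<Rightarrow> 'r" where
  "ncpoly_eval \<iota> as p = sum_list (map (\<lambda>(w, c). word_prod as w * \<iota> c) p)"

definition ncpoly_neg :: "(nat list \<times> 'c::comm_ring_1) list \<Rightarrow> (nat list \<times> 'c) list" where
  "ncpoly_neg p = map (\<lambda>(w, c). (w, - c)) p"

definition ncpoly_mult ::
  "(nat list \<times> 'c::comm_ring_1) list \<Rightarrow> (nat list \<times> 'c) list \<Rightarrow> (nat list \<times> 'c) list" where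
  "ncpoly_mult p q = concat (map (\<lambda>(w1, c1). map (\<lambda>(w2, c2). (w1 @ w2, c1 * c2)) q) p)"

definition ncpoly_coeff :: "(nat list \<times> 'c::comm_ring_1) list \<Rightarrow> nat list \<Rightarrow> 'c" where
  "ncpoly_coeff p w = sum_list (map snd (filter (\<lambda>x. fst x = w) p))"

text \<open>One left-to-right pass moving atom \<open>0\<close> in front of an adjacent atom \<open>1\<close>: when these atoms
  commute, this identifies enough words for the identities needed below.\<close>

fun word_commute01 :: "nat list \<Rightarrow> nat list" where
  "word_commute01 (a # b # w) =
    (if a = 1 \<and> b = 0 then 0 # word_commute01 (1 # w) else a # word_commute01 (b # w))"
| "word_commute01 w = w"

lemma ncpoly_neg_simps: "ncpoly_neg [] = []" "ncpoly_neg ((w, c) # p) = (w, - c) # ncpoly_neg p"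
  by (simp_all add: ncpoly_neg_def)

lemma ncpoly_mult_simps:
  "ncpoly_mult [] q = []"
  "ncpoly_mult ((w, c) # p) q = map (\<lambda>(w2, c2). (w @ w2, c * c2)) q @ ncpoly_mult p q"
  by (simp_all add: ncpoly_mult_def)

lemma ncpoly_coeff_simps:
  "ncpoly_coeff [] w = 0" "ncpoly_coeff ((v, c) # p) w = (if v = w then c else 0) + ncpoly_coeff p w"
  by (simp_all add: ncpoly_coeff_def)

lemma word_prod_append: "word_prod as (v @ w) = word_prod as v * word_prod as w"
  by (simp add: word_prod_def)

lemma word_prod_commute01:
  assumes "as ! 1 * as ! 0 = as ! 0 * as ! 1"
  shows "word_prod as (word_commute01 w) = word_prod as w"
proof (induction w rule: word_commute01.induct)
  case (1 a b w)
  show ?case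
  proof (cases "a = 1 \<and> b = 0")
    case True
    then have "word_prod as (word_commute01 (a # b # w)) = as ! 0 * (as ! 1 * word_prod as w)"
      using 1 by (simp add: word_prod_def)
    also have "\<dots> = as ! 1 * (as ! 0 * word_prod as w)"
      by (simp only: mult.assoc[symmetric] assms)
    finally show ?thesis using True by (simp add: word_prod_def)
  next
    case False
    then have "word_commute01 (a # b # w) = a # word_commute01 (b # w)" by simp
    then show ?thesis using 1(2) False by (simp add: word_prod_def)
  qed
qed (simp_all add: word_prod_def)

locale central_hom =
  fixes \<iota> :: "'c::comm_ring_1 \<Rightarrow> 'r::ring_1"
  assumes hom_add: "\<iota> (a + b) = \<iota> a + \<iota> b"
    and hom_mult: "\<iota> (a * b) = \<iota> a * \<iota> b"
    and hom_one: "\<iota> 1 = 1"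
    and hom_central: "\<iota> c * x = x * \<iota> c"
begin

lemma hom_zero: "\<iota> 0 = 0"
  using hom_add[of 0 0] by simp

lemma hom_uminus: "\<iota> (- a) = - \<iota> a"
  using hom_add[of "- a" a] hom_zero by (simp add: eq_neg_iff_add_eq_0)

lemma hom_diff: "\<iota> (a - b) = \<iota> a - \<iota> b"
  using hom_add[of a "- b"] hom_uminus[of b] by simp

lemma ncpoly_eval_Cons: "ncpoly_eval \<iota> as ((w, c) # p) = word_prod as w * \<iota> c + ncpoly_eval \<iota> as p"
  by (simp add: ncpoly_eval_def)

lemma ncpoly_eval_append: "ncpoly_eval \<iota> as (p @ q) = ncpoly_eval \<iota> as p + ncpoly_eval \<iota> as q"
  by (simp add: ncpoly_eval_def)

lemma ncpoly_eval_neg: "ncpoly_eval \<iota> as (ncpoly_neg p) = - ncpoly_eval \<iota> as p"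
  by (induction p) (auto simp: ncpoly_neg_simps ncpoly_eval_Cons hom_uminus ncpoly_eval_def)

lemma ncpoly_eval_mult: "ncpoly_eval \<iota> as (ncpoly_mult p q) = ncpoly_eval \<iota> as p * ncpoly_eval \<iota> as q"
proof (induction p)
  case Nil
  then show ?case by (simp add: ncpoly_mult_simps ncpoly_eval_def)
next
  case (Cons m p)
  obtain w c where m: "m = (w, c)" by (cases m)
  have "ncpoly_eval \<iota> as (map (\<lambda>(w2, c2). (w @ w2, c * c2)) q) = word_prod as w * \<iota> c * ncpoly_eval \<iota> as q"
  proof (induction q)
    case (Cons m2 q)
    obtain w2 c2 where m2: "m2 = (w2, c2)" by (cases m2)
    have "word_prod as (w @ w2) * \<iota> (c * c2) = word_prod as w * (word_prod as w2 * \<iota> c) * \<iota> c2"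
      by (simp only: word_prod_append hom_mult mult.assoc)
    also have "\<dots> = word_prod as w * \<iota> c * (word_prod as w2 * \<iota> c2)"
      by (simp only: hom_central[of c "word_prod as w2", symmetric] mult.assoc)
    finally show ?case using Cons by (simp add: m2 ncpoly_eval_Cons distrib_left)
  qed (simp add: ncpoly_eval_def)
  then show ?case
    using Cons by (simp add: m ncpoly_mult_simps ncpoly_eval_append ncpoly_eval_Cons distrib_right)
qed

lemma ncpoly_eval_atom: "i < length as \<Longrightarrow> as ! i = ncpoly_eval \<iota> as [([i], 1)]"
  by (simp add: ncpoly_eval_def word_prod_def hom_one)

lemma ncpoly_eval_const: "\<iota> c = ncpoly_eval \<iota> as [([], c)]"
  by (simp add: ncpoly_eval_def word_prod_def)

lemma ncpoly_eval_merge: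
  "ncpoly_eval \<iota> as p + ncpoly_eval \<iota> as q = ncpoly_eval \<iota> as (p @ q)"
  "ncpoly_eval \<iota> as p * ncpoly_eval \<iota> as q = ncpoly_eval \<iota> as (ncpoly_mult p q)"
  "- ncpoly_eval \<iota> as p = ncpoly_eval \<iota> as (ncpoly_neg p)"
  "ncpoly_eval \<iota> as p - ncpoly_eval \<iota> as q = ncpoly_eval \<iota> as (p @ ncpoly_neg q)"
  by (simp_all add: ncpoly_eval_append ncpoly_eval_mult ncpoly_eval_neg)

lemma ncpoly_eval_by_coeff:
  "ncpoly_eval \<iota> as p = (\<Sum>w\<in>set (map fst p). word_prod as w * \<iota> (ncpoly_coeff p w))"
proof (induction p)
  case Nil
  then show ?case by (simp add: ncpoly_eval_def)
next
  case (Cons m p)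
  obtain v c where m: "m = (v, c)" by (cases m)
  let ?S = "set (map fst p)"
  have "(\<Sum>w\<in>insert v ?S. word_prod as w * \<iota> (ncpoly_coeff (m # p) w))
      = (\<Sum>w\<in>insert v ?S. (if w = v then word_prod as v * \<iota> c else 0)
          + word_prod as w * \<iota> (ncpoly_coeff p w))"
    by (rule sum.cong) (auto simp: m ncpoly_coeff_simps hom_add hom_zero distrib_left)
  also have "\<dots> = word_prod as v * \<iota> c + ncpoly_eval \<iota> as p"
  proof -
    have "v \<notin> ?S \<Longrightarrow> filter (\<lambda>x. fst x = v) p = []"
      by (auto simp: filter_empty_conv)
    then have "v \<notin> ?S \<Longrightarrow> ncpoly_coeff p v = 0"
      by (simp add: ncpoly_coeff_def)
    then have "(\<Sum>w\<in>insert v ?S. word_prod as w * \<iota> (ncpoly_coeff p w)) = ncpoly_eval \<iota> as p"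
      using Cons by (cases "v \<in> ?S") (simp_all add: insert_absorb hom_zero)
    then show ?thesis by (simp add: sum.distrib)
  qed
  finally show ?case by (simp add: m ncpoly_eval_Cons)
qed

lemma ncpoly_eval_zeroI: "\<forall>w\<in>set (map fst p). ncpoly_coeff p w = 0 \<Longrightarrow> ncpoly_eval \<iota> as p = 0"
  unfolding ncpoly_eval_by_coeff by (rule sum.neutral) (simp add: hom_zero)

lemma ncpoly_eval_commute01:
  assumes "as ! 1 * as ! 0 = as ! 0 * as ! 1"
  shows "ncpoly_eval \<iota> as p = ncpoly_eval \<iota> as (map (\<lambda>(w, c). (word_commute01 w, c)) p)"
  by (induction p) (auto simp: ncpoly_eval_Cons word_prod_commute01[OF assms] ncpoly_eval_def)

end

lemmas ncpoly_expand_simps =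
  ncpoly_mult_simps ncpoly_neg_simps append.simps list.map prod.case word_commute01.simps list.set
  ball_simps ncpoly_coeff_simps fst_conv

lemmas ncpoly_word_eq_simps =
  list.inject list.distinct numeral_eq_iff semiring_norm zero_neq_numeral numeral_neq_zero
  one_neq_zero zero_neq_one numeral_eq_one_iff one_eq_numeral_iff simp_thms if_True if_False
  add_0_left add_0_right

text \<open>\<open>Duv\<close> and \<open>Zuv\<close> are \<open>u - v\<close> and \<open>1\<close> multiplied by \<open>u\<^sup>-\<^sup>1 v\<^sup>-\<^sup>1\<close>.\<close>

definition Duv :: "complex fps fps" where "Duv = Xv - Xu"
definition Zuv :: "complex fps fps" where "Zuv = Xu * Xv"

abbreviation fps2_const :: "'a::zero \<Rightarrow> 'a fps fps" where
  "fps2_const c \<equiv> fps_const (fps_const c)"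

lemma central_hom_fps_map: "calg \<phi> \<Longrightarrow> central_hom (fps_map \<phi>)"
  by unfold_locales (simp_all add: fps_map_add fps_map_mult fps_map_one, rule fps_map_central)

lemma central_hom_fps2_map: "calg \<phi> \<Longrightarrow> central_hom (fps2_map \<phi>)"
  by unfold_locales (simp_all add: fps2_map_add fps2_map_mult fps2_map_one, rule fps2_map_central)

lemma fps2_map_Xu: "calg \<phi> \<Longrightarrow> fps2_map \<phi> Xu = Xu"
  by (rule fps_ext, rule fps_ext) (simp add: calg_simps fps_X_def)

lemma fps2_map_Xv: "calg \<phi> \<Longrightarrow> fps2_map \<phi> Xv = Xv"
  by (rule fps_ext, rule fps_ext) (simp add: calg_simps fps_X_def fps_one_nth)

lemma fps2_map_Duv: "calg \<phi> \<Longrightarrow> fps2_map \<phi> Duv = Xv - Xu"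
  by (simp add: Duv_def central_hom.hom_diff[OF central_hom_fps2_map] fps2_map_Xu fps2_map_Xv)

lemma fps2_map_Zuv: "calg \<phi> \<Longrightarrow> fps2_map \<phi> Zuv = Xu * Xv"
  by (simp add: Zuv_def central_hom.hom_mult[OF central_hom_fps2_map] fps2_map_Xu fps2_map_Xv)

lemma fps2_linear_left_cancel:
  fixes A :: "'a::ring_1 fps fps"
  assumes "(Xv * fps_const \<alpha> - Xu) * A = 0"
  shows "A = 0"
proof -
  have coeff: "\<alpha> * (if n = 0 then 0 else A $ (n - 1)) - fps_X * A $ n = 0" for n
  proof -
    have "((Xv * fps_const \<alpha> - Xu) * A) $ n = (Xv * (fps_const \<alpha> * A)) $ n - fps_X * A $ n"
      by (simp add: left_diff_distrib mult.assoc)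
    moreover have "(Xv * (fps_const \<alpha> * A)) $ n = (if n = 0 then 0 else \<alpha> * A $ (n - 1))"
      by (cases n) simp_all
    ultimately show ?thesis using assms by simp
  qed
  have "A $ n = 0" for n
  proof (induction n)
    case 0
    then show ?case using coeff[of 0] fps_X_left_cancel by simp
  next
    case (Suc n)
    then show ?case using coeff[of "Suc n"] fps_X_left_cancel by simp
  qed
  then show ?thesis by (intro fps_ext) simp
qed

lemma fps2_map_linear_left_cancel:
  assumes calg: "calg \<phi>" and "a \<noteq> 0"
    and "fps2_map \<phi> (fps2_const a * Duv + fps2_const b * Zuv) * A = 0"
  shows "A = 0"
proof -
  interpret central_hom "fps2_map \<phi>" using calg by (rule central_hom_fps2_map)
  have "fps2_const (1 / a) * fps2_const a = (1 :: complex fps fps)"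
    "fps2_const (1 / a) * fps2_const b = (fps2_const (b / a) :: complex fps fps)"
    using \<open>a \<noteq> 0\<close> by simp_all
  then have normalize: "fps2_const (1 / a) * (fps2_const a * Duv + fps2_const b * Zuv)
      = Duv + fps2_const (b / a) * Zuv"
    by (simp add: distrib_left flip: mult.assoc)
  have "fps2_map \<phi> (fps2_const (1 / a)) * (fps2_map \<phi> (fps2_const a * Duv + fps2_const b * Zuv) * A) = 0"
    using assms(3) by simp
  then have "fps2_map \<phi> (Duv + fps2_const (b / a) * Zuv) * A = 0"
    by (simp only: normalize hom_mult[symmetric] mult.assoc[symmetric])
  moreover have "fps2_map \<phi> (Duv + fps2_const (b / a) * Zuv) = Xv - Xu + fps2_const (\<phi> (b / a)) * (Xu * Xv)"
    by (simp add: hom_add hom_mult fps2_map_Duv fps2_map_Zuv fps2_map_const calg)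
  moreover have "\<dots> = Xv * fps_const (1 + fps_const (\<phi> (b / a)) * fps_X) - Xu"
    by (simp add: algebra_simps fps_const_mult[symmetric] fps_const_add[symmetric] mult.assoc
        fps_mult_fps_X_commute del: fps_const_mult fps_const_add)
  ultimately show ?thesis by (simp add: fps2_linear_left_cancel)
qed

lemma fps2_map_Duv_Zuv_cancel:
  assumes "calg \<phi>"
  shows "fps2_map \<phi> (Duv - Zuv) * A = 0 \<Longrightarrow> A = 0"
    and "fps2_map \<phi> (Duv + Zuv) * A = 0 \<Longrightarrow> A = 0"
    and "fps2_map \<phi> (2 * Duv - Zuv) * A = 0 \<Longrightarrow> A = 0"
proof -
  have c: "fps2_const (-1 :: complex) = -1" "fps2_const (2 :: complex) = 2"
    by (simp only: fps_const_neg[symmetric] fps_const_1_eq_1, simp only: numeral_fps_const)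
  have lin: "Duv - Zuv = fps2_const 1 * Duv + fps2_const (-1) * Zuv"
    "Duv + Zuv = fps2_const 1 * Duv + fps2_const 1 * Zuv"
    "2 * Duv - Zuv = fps2_const 2 * Duv + fps2_const (-1) * Zuv"
    by (simp_all only: c fps_const_1_eq_1) simp_all
  show "A = 0" if "fps2_map \<phi> (Duv - Zuv) * A = 0"
    using that unfolding lin(1) by (rule fps2_map_linear_left_cancel[OF assms, rotated]) simp
  show "A = 0" if "fps2_map \<phi> (Duv + Zuv) * A = 0"
    using that unfolding lin(2) by (rule fps2_map_linear_left_cancel[OF assms, rotated]) simp
  show "A = 0" if "fps2_map \<phi> (2 * Duv - Zuv) * A = 0"
    using that unfolding lin(3) by (rule fps2_map_linear_left_cancel[OF assms, rotated]) simp
qed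

subsection \<open>Specialising \<open>v = u - 1\<close>\<close>

text \<open>\<open>fps_geom_tail = u\<^sup>-\<^sup>1 + u\<^sup>-\<^sup>2 + \<dots> = (u - 1)\<^sup>-\<^sup>1\<close>, so substituting it for \<open>v\<^sup>-\<^sup>1\<close> specialises \<open>v\<close> to \<open>u - 1\<close>.
  The substitution is well defined because its \<open>n\<close>-th summand starts in degree \<open>n\<close>.\<close>

definition fps_geom_tail :: "'a::ring_1 fps" where
  "fps_geom_tail = Abs_fps (\<lambda>k. if k = 0 then 0 else 1)"

definition fps2_subst_v :: "'a::ring_1 fps fps \<Rightarrow> 'a fps" where
  "fps2_subst_v F = Abs_fps (\<lambda>N. (\<Sum>n\<le>N. F $ n * fps_geom_tail ^ n) $ N)"

lemma fps_geom_tail_eq: "fps_geom_tail = fps_X * Abs_fps (\<lambda>_. 1 :: 'a::ring_1)"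
  by (rule fps_ext) (simp add: fps_geom_tail_def)

lemma fps_geom_tail_power_central: "fps_geom_tail ^ n * f = f * fps_geom_tail ^ n"
proof -
  have central: "fps_geom_tail * g = g * fps_geom_tail" for g :: "'a fps"
    by (rule fps_mult_commute_of_central) (simp add: fps_geom_tail_def)
  show ?thesis
    by (induction n) (simp_all add: mult.assoc central, metis mult.assoc central)
qed

lemma fps_geom_tail_power_nth_less: "i < n \<Longrightarrow> (f * fps_geom_tail ^ n) $ i = (0 :: 'a::ring_1)"
proof -
  have "i < n \<Longrightarrow> (fps_geom_tail ^ n :: 'a fps) $ i = 0" for i
  proof (induction n arbitrary: i)
    case (Suc n)
    then show ?case
      by (simp add: fps_mult_nth fps_geom_tail_def) (intro sum.neutral, auto)
  qed simp
  then show "i < n \<Longrightarrow> (f * fps_geom_tail ^ n) $ i = 0"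
    by (simp add: fps_mult_nth)
qed

lemma fps2_subst_v_nth:
  assumes "N \<le> K"
  shows "fps2_subst_v F $ N = (\<Sum>n\<le>K. F $ n * fps_geom_tail ^ n) $ N"
proof -
  have "{..K} = {..N} \<union> {N<..K}" using assms by auto
  then have "(\<Sum>n\<le>K. F $ n * fps_geom_tail ^ n)
      = (\<Sum>n\<le>N. F $ n * fps_geom_tail ^ n) + (\<Sum>n\<in>{N<..K}. F $ n * fps_geom_tail ^ n)"
    by (simp add: sum.union_disjoint ivl_disj_int)
  moreover have "(\<Sum>n\<in>{N<..K}. F $ n * fps_geom_tail ^ n) $ N = 0"
    by (simp add: fps_sum_nth fps_geom_tail_power_nth_less)
  ultimately show ?thesis by (simp add: fps2_subst_v_def)
qed

lemma fps2_subst_v_add: "fps2_subst_v (F + G) = fps2_subst_v F + fps2_subst_v G"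
  by (rule fps_ext) (simp add: fps2_subst_v_def distrib_right sum.distrib)

lemma fps2_subst_v_diff: "fps2_subst_v (F - G) = fps2_subst_v F - fps2_subst_v G"
  by (rule fps_ext) (simp add: fps2_subst_v_def left_diff_distrib sum_subtractf)

lemma fps2_subst_v_const: "fps2_subst_v (fps_const c) = c"
proof (rule fps_ext)
  fix N
  have "(\<Sum>n\<le>N. fps_const c $ n * fps_geom_tail ^ n) = (\<Sum>n\<le>N. if n = 0 then c else 0)"
    by (rule sum.cong) auto
  then show "fps2_subst_v (fps_const c) $ N = c $ N" by (simp add: fps2_subst_v_def)
qed

lemma fps2_subst_v_uminus: "fps2_subst_v (- F) = - fps2_subst_v F"
  using fps2_subst_v_diff[of 0 F] fps2_subst_v_const[of 0] by simp

lemma fps2_subst_v_numeral: "fps2_subst_v (numeral n) = numeral n"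
  by (simp add: numeral_fps_const fps2_subst_v_const)

lemma fps2_subst_v_X: "fps2_subst_v fps_X = (fps_geom_tail :: 'a::ring_1 fps)"
proof (rule fps_ext)
  fix N
  show "fps2_subst_v fps_X $ N = fps_geom_tail $ N"
  proof (cases N)
    case 0
    then show ?thesis by (simp add: fps2_subst_v_def fps_geom_tail_def)
  next
    case (Suc M)
    have "fps2_subst_v fps_X $ N = (\<Sum>n\<le>N. if n = 1 then fps_geom_tail else 0) $ N"
      unfolding fps2_subst_v_def fps_nth_Abs_fps
      by (rule arg_cong[where f = "\<lambda>x. x $ N"], rule sum.cong) (auto simp: fps_X_def)
    also have "\<dots> = fps_geom_tail $ N" using Suc by simp
    finally show ?thesis .
  qed
qed

lemma fps2_subst_v_mult: "fps2_subst_v (F * G) = fps2_subst_v F * fps2_subst_v G"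
proof (rule fps_ext)
  fix N
  define T where "T H = (\<Sum>n\<le>N. H $ n * fps_geom_tail ^ n)" for H :: "'a fps fps"
  define X where "X a b = F $ a * G $ b * fps_geom_tail ^ (a + b)" for a b
  have "(fps2_subst_v F * fps2_subst_v G) $ N = (T F * T G) $ N"
    by (simp add: fps_mult_nth fps2_subst_v_nth[of _ N] T_def)
  also have "T F * T G = (\<Sum>a\<le>N. \<Sum>b\<le>N. X a b)"
  proof -
    have "F $ a * fps_geom_tail ^ a * (G $ b * fps_geom_tail ^ b) = X a b" for a b
    proof -
      have "F $ a * fps_geom_tail ^ a * (G $ b * fps_geom_tail ^ b)
          = F $ a * (fps_geom_tail ^ a * G $ b) * fps_geom_tail ^ b"
        by (simp only: mult.assoc)
      also have "\<dots> = F $ a * (G $ b * fps_geom_tail ^ a) * fps_geom_tail ^ b"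
        by (simp only: fps_geom_tail_power_central)
      also have "\<dots> = X a b"
        by (simp only: X_def mult.assoc power_add)
      finally show ?thesis .
    qed
    then show ?thesis by (simp add: T_def sum_product)
  qed
  also have "(\<Sum>a\<le>N. \<Sum>b\<le>N. X a b) $ N = (\<Sum>a\<le>N. \<Sum>b\<le>N. X a b $ N)"
    by (simp add: fps_sum_nth)
  also have "\<dots> = (\<Sum>(a, b)\<in>{..N} \<times> {..N}. X a b $ N)"
    by (simp add: sum.cartesian_product)
  also have "\<dots> = (\<Sum>(a, b)\<in>{(a, b). a + b \<le> N}. X a b $ N)"
  proof (rule sum.mono_neutral_right)
    show "\<forall>i\<in>{..N} \<times> {..N} - {(a, b). a + b \<le> N}. (case i of (a, b) \<Rightarrow> X a b $ N) = 0"
    proof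
      fix i assume i: "i \<in> {..N} \<times> {..N} - {(a, b). a + b \<le> N}"
      obtain a b where ab: "i = (a, b)" by (cases i)
      with i have "N < a + b" by auto
      then show "(case i of (a, b) \<Rightarrow> X a b $ N) = 0"
        using ab by (simp add: X_def fps_geom_tail_power_nth_less)
    qed
  qed auto
  also have "\<dots> = (\<Sum>n\<le>N. \<Sum>i\<le>n. X i (n - i) $ N)"
    by (rule sum.triangle_reindex_eq)
  also have "\<dots> = fps2_subst_v (F * G) $ N"
    by (simp add: fps2_subst_v_def fps_sum_nth fps_mult_nth X_def sum_distrib_right atLeast0AtMost)
  finally show "fps2_subst_v (F * G) $ N = (fps2_subst_v F * fps2_subst_v G) $ N" ..
qed

lemma fps2_subst_v_fps_u: "fps2_subst_v (fps_u a) = Abs_fps a"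
  by (simp add: fps_u_def fps2_subst_v_const)

lemma fps2_subst_v_nth_0: "fps2_subst_v F $ 0 = F $ 0 $ 0"
  by (simp add: fps2_subst_v_def)

lemma fps_map_geom_tail: "calg \<phi> \<Longrightarrow> fps_map \<phi> fps_geom_tail = fps_geom_tail"
  by (rule fps_ext) (simp add: fps_geom_tail_def calg_simps)

lemma fps2_subst_v_fps2_map:
  assumes "calg \<phi>"
  shows "fps2_subst_v (fps2_map \<phi> F) = fps_map \<phi> (fps2_subst_v F)"
proof (rule fps_ext)
  fix N
  have "fps2_subst_v (fps2_map \<phi> F) $ N = (\<Sum>n\<le>N. fps_map \<phi> (F $ n * fps_geom_tail ^ n)) $ N"
    by (simp add: fps2_subst_v_def fps_map_mult[OF assms] fps_map_power[OF assms] fps_map_geom_tail[OF assms])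
  also have "\<dots> = fps_map \<phi> (fps2_subst_v F) $ N"
    by (simp only: fps_map_sum[OF assms, symmetric]) (simp add: fps2_subst_v_def)
  finally show "fps2_subst_v (fps2_map \<phi> F) $ N = fps_map \<phi> (fps2_subst_v F) $ N" .
qed

lemma fps2_subst_v_Duv: "fps2_subst_v Duv = fps_X * fps_geom_tail"
proof -
  have "fps2_subst_v Duv = fps_geom_tail - fps_X"
    by (simp add: Duv_def fps2_subst_v_diff fps2_subst_v_X fps2_subst_v_const)
  also have "\<dots> = fps_X * fps_geom_tail"
  proof (rule fps_ext)
    fix n
    show "(fps_geom_tail - fps_X) $ n = (fps_X * fps_geom_tail :: complex fps) $ n"
      by (cases n; cases "n - 1") (simp_all add: fps_geom_tail_def)
  qed
  finally show ?thesis .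
qed

lemma fps2_subst_v_Zuv: "fps2_subst_v Zuv = fps_X * fps_geom_tail"
  by (simp add: Zuv_def fps2_subst_v_mult fps2_subst_v_X fps2_subst_v_const)

lemma fps_geom_tail_left_cancel: "fps_geom_tail * A = (0 :: 'a::ring_1 fps) \<Longrightarrow> A = 0"
  unfolding fps_geom_tail_eq mult.assoc
  by (drule fps_X_left_cancel) (rule fps_left_cancel[of 1]; simp)

subsection \<open>The RTT relation as an identity of power series\<close>

text \<open>Multiplied by \<open>(u - v)(u - v - 1/2)\<close>, the R-matrix becomes
  \<open>(u - v)(u - v - 1/2) - (u - v - 1/2) P + (u - v) Q\<close>; after a further factor \<open>(u\<^sup>-\<^sup>1 v\<^sup>-\<^sup>1)\<^sup>2\<close> its
  three coefficients act on power series as follows.\<close>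

definition rmat_id :: "(complex \<Rightarrow> 'a::ring_1) \<Rightarrow> 'a fps fps \<Rightarrow> 'a fps fps" where
  "rmat_id \<phi> A = fps2_map \<phi> Duv * (fps2_map \<phi> Duv * A - fps2_map \<phi> (fps2_const (1/2)) * (fps2_map \<phi> Zuv * A))"

definition rmat_P :: "(complex \<Rightarrow> 'a::ring_1) \<Rightarrow> 'a fps fps \<Rightarrow> 'a fps fps" where
  "rmat_P \<phi> A = fps2_map \<phi> Zuv * (fps2_map \<phi> Duv * A - fps2_map \<phi> (fps2_const (1/2)) * (fps2_map \<phi> Zuv * A))"

definition rmat_Q :: "(complex \<Rightarrow> 'a::ring_1) \<Rightarrow> 'a fps fps \<Rightarrow> 'a fps fps" where
  "rmat_Q \<phi> A = fps2_map \<phi> Duv * (fps2_map \<phi> Zuv * A)"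

lemma fps2_of_grid_mul_umvh:
  assumes calg: "calg \<phi>" and supp: "grid_supported 0 C"
  shows "fps2_of_grid 1 (mul_umvh \<phi> C)
    = fps2_map \<phi> Duv * fps2_of_grid 0 C - fps2_map \<phi> (fps2_const (1/2)) * (fps2_map \<phi> Zuv * fps2_of_grid 0 C)"
proof -
  have "fps2_of_grid 1 (mul_umvh \<phi> C)
      = fps2_of_grid (0 + 1) (mul_umv C) - fps2_of_grid (0 + 1) (scal2 \<phi> (1/2) C)"
    by (simp add: mul_umvh_def fps2_of_grid_diff)
  also have "\<dots> = (Xv - Xu) * fps2_of_grid 0 C - fps2_const (\<phi> (1/2)) * ((Xu * Xv) * fps2_of_grid 0 C)"
    by (simp only: fps2_of_grid_mul_umv[OF supp] fps2_of_grid_scal2 fps2_of_grid_shift[OF supp])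
  finally show ?thesis by (simp add: fps2_map_Duv fps2_map_Zuv fps2_map_const calg)
qed

lemma grid_supported_mul_umvh: "grid_supported s A \<Longrightarrow> grid_supported (s + 1) (mul_umvh \<phi> A)"
  unfolding mul_umvh_def
  by (intro grid_supported_diff grid_supported_mul_umv grid_supported_scal2)
    (assumption, erule grid_supported_mono, simp)

lemma fps2_of_grid_rmat_id:
  assumes calg: "calg \<phi>" and supp: "grid_supported 0 C"
  shows "fps2_of_grid 2 (mul_umv (mul_umvh \<phi> C)) = rmat_id \<phi> (fps2_of_grid 0 C)"
proof -
  have "fps2_of_grid (1 + 1) (mul_umv (mul_umvh \<phi> C)) = (Xv - Xu) * fps2_of_grid 1 (mul_umvh \<phi> C)"
    using grid_supported_mul_umvh[OF supp] by (intro fps2_of_grid_mul_umv) simp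
  then show ?thesis by (simp add: rmat_id_def fps2_of_grid_mul_umvh[OF calg supp] fps2_map_Duv[OF calg])
qed

lemma fps2_of_grid_rmat_P:
  assumes calg: "calg \<phi>" and supp: "grid_supported 0 C"
  shows "fps2_of_grid 2 (mul_umvh \<phi> C) = rmat_P \<phi> (fps2_of_grid 0 C)"
proof -
  have "fps2_of_grid (1 + 1) (mul_umvh \<phi> C) = (Xu * Xv) * fps2_of_grid 1 (mul_umvh \<phi> C)"
    using grid_supported_mul_umvh[OF supp] by (intro fps2_of_grid_shift) simp
  then show ?thesis by (simp add: rmat_P_def fps2_of_grid_mul_umvh[OF calg supp] fps2_map_Zuv[OF calg])
qed

lemma fps2_of_grid_rmat_Q:
  assumes calg: "calg \<phi>" and supp: "grid_supported 0 C"
  shows "fps2_of_grid 2 (mul_umv C) = rmat_Q \<phi> (fps2_of_grid 0 C)"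
proof -
  have "fps2_of_grid (1 + 1) (mul_umv C) = (Xv - Xu) * fps2_of_grid 1 C"
    using grid_supported_mono[OF supp, of 1] by (intro fps2_of_grid_mul_umv) simp_all
  moreover have "fps2_of_grid (0 + 1) C = (Xu * Xv) * fps2_of_grid 0 C"
    by (rule fps2_of_grid_shift[OF supp])
  ultimately show ?thesis by (simp add: rmat_Q_def fps2_map_Duv[OF calg] fps2_map_Zuv[OF calg])
qed

lemma rtt_rel_fps2:
  assumes calg: "calg \<phi>" and rtt: "rtt_rel \<phi> t"
    and "i \<in> idx" "j \<in> idx" "k \<in> idx" "l \<in> idx"
  shows "rmat_id \<phi> (fps_u (t i j) * fps_v (t k l)) - rmat_P \<phi> (fps_u (t k j) * fps_v (t i l))
      + (if k = - i then rmat_Q \<phi> (\<Sum>a\<in>idx. fps_u (t a j) * fps_v (t (- a) l)) else 0)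
    = rmat_id \<phi> (fps_v (t k l) * fps_u (t i j)) - rmat_P \<phi> (fps_v (t k j) * fps_u (t i l))
      + (if l = - j then rmat_Q \<phi> (\<Sum>a\<in>idx. fps_v (t k (- a)) * fps_u (t i a)) else 0)"
proof -
  have supp_sum: "grid_supported 0 (\<Sum>a\<in>idx. cmul2 (A a) (B a))" for A B :: "int \<Rightarrow> int \<Rightarrow> int \<Rightarrow> 'a"
    by (intro grid_supported_sum grid_supported_cmul2)
  from rtt assms(3-6) have "mul_umv (mul_umvh \<phi> (cmul2 (ser_u (t i j)) (ser_v (t k l))))
       - mul_umvh \<phi> (cmul2 (ser_u (t k j)) (ser_v (t i l)))
       + (if k = - i then mul_umv (\<Sum>a\<in>idx. cmul2 (ser_u (t a j)) (ser_v (t (- a) l))) else 0)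
    = mul_umv (mul_umvh \<phi> (cmul2 (ser_v (t k l)) (ser_u (t i j))))
       - mul_umvh \<phi> (cmul2 (ser_v (t k j)) (ser_u (t i l)))
       + (if l = - j then mul_umv (\<Sum>a\<in>idx. cmul2 (ser_v (t k (- a))) (ser_u (t i a))) else 0)"
    (is "?lhs = ?rhs") unfolding rtt_rel_def by blast
  then have "fps2_of_grid 2 ?lhs = fps2_of_grid 2 ?rhs" by simp
  then show ?thesis
    by (simp only: fps2_of_grid_add fps2_of_grid_diff fps2_of_grid_if fps2_of_grid_sum
        fps2_of_grid_rmat_id[OF calg grid_supported_cmul2] fps2_of_grid_rmat_P[OF calg grid_supported_cmul2]
        fps2_of_grid_rmat_Q[OF calg supp_sum] fps2_of_grid_uv fps2_of_grid_vu)
qed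

lemma two_mult_fps2_const_half: "2 * fps2_const (1/2) = (1 :: complex fps fps)"
  by (rule fps_ext, rule fps_ext) (simp add: numeral_fps_const)

text \<open>Clearing the factor \<open>1/2\<close> from the relation; \<open>rtt_form\<close> is twice its left-hand side minus its
  right-hand side without the \<open>Q\<close>-term.\<close>

abbreviation P2uv :: "complex fps fps" where "P2uv \<equiv> 2 * Duv - Zuv"

definition rtt_form :: "(complex \<Rightarrow> 'a::ring_1) \<Rightarrow> 'a fps fps \<Rightarrow> 'a fps fps \<Rightarrow> 'a fps fps \<Rightarrow> 'a fps fps \<Rightarrow> 'a fps fps"
  where "rtt_form \<phi> X Y W V =
    fps2_map \<phi> (Duv * P2uv) * X - fps2_map \<phi> (Zuv * P2uv) * Y
      - (fps2_map \<phi> (Duv * P2uv) * W - fps2_map \<phi> (Zuv * P2uv) * V)"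

lemma rtt_formI:
  assumes calg: "calg \<phi>"
    and rel: "rmat_id \<phi> X - rmat_P \<phi> Y = rmat_id \<phi> W - rmat_P \<phi> V + (if c then rmat_Q \<phi> S else 0)"
  shows "rtt_form \<phi> X Y W V = (if c then fps2_map \<phi> (2 * Zuv * Duv) * S else 0)"
proof -
  interpret central_hom "fps2_map \<phi>" using calg by (rule central_hom_fps2_map)
  have "fps2_map \<phi> 2 * (fps2_map \<phi> a * (fps2_map \<phi> Duv * A - fps2_map \<phi> (fps2_const (1/2)) * (fps2_map \<phi> Zuv * A)))
      = fps2_map \<phi> (a * P2uv) * A" for a A
  proof -
    have "fps2_map \<phi> Duv * A - fps2_map \<phi> (fps2_const (1/2)) * (fps2_map \<phi> Zuv * A)
        = fps2_map \<phi> (Duv - fps2_const (1/2) * Zuv) * A"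
      by (simp only: hom_diff hom_mult mult.assoc left_diff_distrib)
    moreover have "2 * (a * (Duv - fps2_const (1/2) * Zuv)) = a * (2 * Duv - (2 * fps2_const (1/2)) * Zuv)"
      by (simp add: algebra_simps)
    then have "2 * (a * (Duv - fps2_const (1/2) * Zuv)) = a * P2uv"
      by (simp only: two_mult_fps2_const_half mult_1_left)
    ultimately show ?thesis by (simp only: hom_mult[symmetric] mult.assoc[symmetric])
  qed
  then have scale: "fps2_map \<phi> 2 * rmat_id \<phi> A = fps2_map \<phi> (Duv * P2uv) * A"
    "fps2_map \<phi> 2 * rmat_P \<phi> A = fps2_map \<phi> (Zuv * P2uv) * A" for A
    by (simp_all only: rmat_id_def rmat_P_def)
  have "2 * Zuv * Duv = 2 * (Duv * Zuv)"
    by (simp add: algebra_simps)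
  then have "fps2_map \<phi> 2 * rmat_Q \<phi> S = fps2_map \<phi> (2 * Zuv * Duv) * S"
    by (simp only: rmat_Q_def hom_mult mult.assoc)
  moreover have "fps2_map \<phi> 2 * (rmat_id \<phi> X - rmat_P \<phi> Y - (rmat_id \<phi> W - rmat_P \<phi> V))
      = (if c then fps2_map \<phi> 2 * rmat_Q \<phi> S else 0)"
    using rel by simp
  ultimately show ?thesis
    by (simp only: rtt_form_def right_diff_distrib scale)
qed

subsection \<open>Relations within one row of \<open>T(u)\<close>\<close>

locale rtt_row =
  fixes \<phi> :: "complex \<Rightarrow> 'a::ring_1" and r :: "int \<Rightarrow> nat \<Rightarrow> 'a" and k e g :: "nat \<Rightarrow> 'a"
  assumes phi_calg: "calg \<phi>" and k_0: "k 0 = 1"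
    and row: "r (-1) = k" "r 0 = cmul1 k e" "r 1 = cmul1 k g"
    and rtt: "\<And>j l. j \<in> idx \<Longrightarrow> l \<in> idx \<Longrightarrow>
      rmat_id \<phi> (fps_u (r j) * fps_v (r l)) - rmat_P \<phi> (fps_u (r j) * fps_v (r l))
      = rmat_id \<phi> (fps_v (r l) * fps_u (r j)) - rmat_P \<phi> (fps_v (r j) * fps_u (r l))
        + (if l = - j then rmat_Q \<phi> (\<Sum>a\<in>idx. fps_v (r (- a)) * fps_u (r a)) else 0)"
begin

abbreviation "\<iota> \<equiv> fps2_map \<phi>"
abbreviation "ku \<equiv> fps_u k"
abbreviation "kv \<equiv> fps_v k"
abbreviation "eu \<equiv> fps_u e"
abbreviation "ev \<equiv> fps_v e"
abbreviation "gu \<equiv> fps_u g"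
abbreviation "gv \<equiv> fps_v g"

sublocale scal: central_hom "fps2_map \<phi>"
  by (rule central_hom_fps2_map[OF phi_calg])

sublocale scal1: central_hom "fps_map \<phi>"
  by (rule central_hom_fps_map[OF phi_calg])

lemma ku_left_cancel: "ku * A = 0 \<Longrightarrow> A = 0"
  unfolding fps_u_def
  by (rule fps_left_cancel[of "fps_left_inverse (Abs_fps k) 1"]) (simp_all add: fps_left_inverse k_0)

lemma kv_left_cancel: "kv * A = 0 \<Longrightarrow> A = 0"
  by (rule fps_left_cancel[of 1]) (simp_all add: k_0 fps_v_def)

text \<open>The relations for \<open>(j, l) = (-1,-1), (-1,0), (0,-1), (0,0), (-1,1), (1,-1)\<close>; the \<open>Q\<close>-term is
  \<open>\<Sum>\<^sub>a t\<^sub>-\<^sub>1\<^sub>,\<^sub>-\<^sub>a(v) t\<^sub>-\<^sub>1\<^sub>,\<^sub>a(u)\<close>.\<close>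

lemma rtt_form_row:
  "rtt_form \<phi> (ku * kv) (ku * kv) (kv * ku) (kv * ku) = 0"
  "rtt_form \<phi> (ku * (kv * ev)) (ku * (kv * ev)) (kv * ev * ku) (kv * (ku * eu)) = 0"
  "rtt_form \<phi> (ku * eu * kv) (ku * eu * kv) (kv * (ku * eu)) (kv * ev * ku) = 0"
  "rtt_form \<phi> (ku * eu * (kv * ev)) (ku * eu * (kv * ev)) (kv * ev * (ku * eu)) (kv * ev * (ku * eu))
    = \<iota> (2 * Zuv * Duv) * (kv * gv * ku + (kv * ev * (ku * eu) + kv * (ku * gu)))"
  "rtt_form \<phi> (ku * (kv * gv)) (ku * (kv * gv)) (kv * gv * ku) (kv * (ku * gu))
    = \<iota> (2 * Zuv * Duv) * (kv * gv * ku + (kv * ev * (ku * eu) + kv * (ku * gu)))"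
  "rtt_form \<phi> (ku * gu * kv) (ku * gu * kv) (kv * (ku * gu)) (kv * gv * ku)
    = \<iota> (2 * Zuv * Duv) * (kv * gv * ku + (kv * ev * (ku * eu) + kv * (ku * gu)))"
proof -
  have rel: "rtt_form \<phi> (fps_u (r j) * fps_v (r l)) (fps_u (r j) * fps_v (r l))
      (fps_v (r l) * fps_u (r j)) (fps_v (r j) * fps_u (r l))
    = (if l = - j then \<iota> (2 * Zuv * Duv) * (\<Sum>a\<in>idx. fps_v (r (- a)) * fps_u (r a)) else 0)"
    if "j \<in> idx" "l \<in> idx" for j l
    by (rule rtt_formI[OF phi_calg rtt[OF that]])
  have sum_idx: "(\<Sum>a\<in>idx. f a) = f (-1) + (f 0 + f 1)" for f :: "int \<Rightarrow> 'a fps fps"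
    by (simp add: idx_def)
  show "rtt_form \<phi> (ku * kv) (ku * kv) (kv * ku) (kv * ku) = 0"
    using rel[of "-1" "-1"] unfolding sum_idx by (simp add: idx_def row fps_u_cmul1 fps_v_cmul1)
  show "rtt_form \<phi> (ku * (kv * ev)) (ku * (kv * ev)) (kv * ev * ku) (kv * (ku * eu)) = 0"
    using rel[of "-1" 0] unfolding sum_idx by (simp add: idx_def row fps_u_cmul1 fps_v_cmul1)
  show "rtt_form \<phi> (ku * eu * kv) (ku * eu * kv) (kv * (ku * eu)) (kv * ev * ku) = 0"
    using rel[of 0 "-1"] unfolding sum_idx by (simp add: idx_def row fps_u_cmul1 fps_v_cmul1)
  show "rtt_form \<phi> (ku * eu * (kv * ev)) (ku * eu * (kv * ev)) (kv * ev * (ku * eu)) (kv * ev * (ku * eu))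
      = \<iota> (2 * Zuv * Duv) * (kv * gv * ku + (kv * ev * (ku * eu) + kv * (ku * gu)))"
    using rel[of 0 0] unfolding sum_idx by (simp add: idx_def row fps_u_cmul1 fps_v_cmul1)
  show "rtt_form \<phi> (ku * (kv * gv)) (ku * (kv * gv)) (kv * gv * ku) (kv * (ku * gu))
      = \<iota> (2 * Zuv * Duv) * (kv * gv * ku + (kv * ev * (ku * eu) + kv * (ku * gu)))"
    using rel[of "-1" 1] unfolding sum_idx by (simp add: idx_def row fps_u_cmul1 fps_v_cmul1)
  show "rtt_form \<phi> (ku * gu * kv) (ku * gu * kv) (kv * (ku * gu)) (kv * gv * ku)
      = \<iota> (2 * Zuv * Duv) * (kv * gv * ku + (kv * ev * (ku * eu) + kv * (ku * gu)))"
    using rel[of 1 "-1"] unfolding sum_idx by (simp add: idx_def row fps_u_cmul1 fps_v_cmul1)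
qed

definition atoms :: "'a fps fps list" where "atoms = [ku, kv, eu, ev, gu, gv]"

lemma atoms_eval:
  "ku = ncpoly_eval \<iota> atoms [([0], 1)]" "kv = ncpoly_eval \<iota> atoms [([1], 1)]"
  "eu = ncpoly_eval \<iota> atoms [([2], 1)]" "ev = ncpoly_eval \<iota> atoms [([3], 1)]"
  "gu = ncpoly_eval \<iota> atoms [([4], 1)]" "gv = ncpoly_eval \<iota> atoms [([5], 1)]"
  by (subst scal.ncpoly_eval_atom[symmetric]; simp add: atoms_def)+

lemmas atoms_reify = atoms_eval scal.ncpoly_eval_const[where as = atoms] scal.ncpoly_eval_merge

lemma k_commute: "kv * ku = ku * kv"
proof -
  have "\<iota> (Duv - Zuv) * (\<iota> P2uv * (ku * kv - kv * ku)) = rtt_form \<phi> (ku * kv) (ku * kv) (kv * ku) (kv * ku)"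
    unfolding rtt_form_def
    by (rule eq_iff_diff_eq_0[THEN iffD2], simp only: atoms_reify, rule scal.ncpoly_eval_zeroI,
        simp only: ncpoly_expand_simps, simp only: ncpoly_word_eq_simps, ((rule conjI | algebra)+)?)
  then have "\<iota> (Duv - Zuv) * (\<iota> P2uv * (ku * kv - kv * ku)) = 0"
    by (simp only: rtt_form_row)
  then have "ku * kv - kv * ku = 0"
    using fps2_map_Duv_Zuv_cancel(1,3)[OF phi_calg] by blast
  then show ?thesis by simp
qed

lemma atoms_commute: "atoms ! 1 * atoms ! 0 = atoms ! 0 * atoms ! 1"
  by (simp add: atoms_def k_commute)

lemma ev_ku_exchange: "\<iota> Duv * (ev * ku) = ku * (\<iota> (Duv - Zuv) * ev + \<iota> Zuv * eu)"
proof -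
  have "\<iota> P2uv * (kv * (ku * (\<iota> (Duv - Zuv) * ev + \<iota> Zuv * eu) - \<iota> Duv * (ev * ku)))
      = rtt_form \<phi> (ku * (kv * ev)) (ku * (kv * ev)) (kv * ev * ku) (kv * (ku * eu))"
    unfolding rtt_form_def
    by (rule eq_iff_diff_eq_0[THEN iffD2], simp only: atoms_reify, subst scal.ncpoly_eval_commute01[OF atoms_commute],
        rule scal.ncpoly_eval_zeroI, simp only: ncpoly_expand_simps, simp only: ncpoly_word_eq_simps,
        ((rule conjI | algebra)+)?)
  then have "kv * (ku * (\<iota> (Duv - Zuv) * ev + \<iota> Zuv * eu) - \<iota> Duv * (ev * ku)) = 0"
    using fps2_map_Duv_Zuv_cancel(3)[OF phi_calg] by (simp only: rtt_form_row)
  then have "ku * (\<iota> (Duv - Zuv) * ev + \<iota> Zuv * eu) - \<iota> Duv * (ev * ku) = 0"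
    by (rule kv_left_cancel)
  then show ?thesis by simp
qed

lemma eu_kv_exchange: "\<iota> Duv * (eu * kv) = kv * (\<iota> (Duv + Zuv) * eu - \<iota> Zuv * ev)"
proof -
  define X where "X = \<iota> (Duv - Zuv) * (ku * eu * kv) - \<iota> Duv * (kv * ku * eu) + \<iota> Zuv * (kv * ev * ku)"
  have "\<iota> P2uv * X = rtt_form \<phi> (ku * eu * kv) (ku * eu * kv) (kv * (ku * eu)) (kv * ev * ku)"
    unfolding rtt_form_def X_def
    by (rule eq_iff_diff_eq_0[THEN iffD2], simp only: atoms_reify, subst scal.ncpoly_eval_commute01[OF atoms_commute],
        rule scal.ncpoly_eval_zeroI, simp only: ncpoly_expand_simps, simp only: ncpoly_word_eq_simps,
        ((rule conjI | algebra)+)?)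
  then have X: "X = 0"
    using fps2_map_Duv_Zuv_cancel(3)[OF phi_calg] by (simp only: rtt_form_row)
  have "ku * (\<iota> (Duv - Zuv) * (\<iota> Duv * (eu * kv) - kv * (\<iota> (Duv + Zuv) * eu - \<iota> Zuv * ev)))
      = \<iota> Duv * X - \<iota> Zuv * (kv * (\<iota> Duv * (ev * ku) - ku * (\<iota> (Duv - Zuv) * ev + \<iota> Zuv * eu)))"
    unfolding X_def
    by (rule eq_iff_diff_eq_0[THEN iffD2], simp only: atoms_reify, subst scal.ncpoly_eval_commute01[OF atoms_commute],
        rule scal.ncpoly_eval_zeroI, simp only: ncpoly_expand_simps, simp only: ncpoly_word_eq_simps,
        ((rule conjI | algebra)+)?)
  then have "ku * (\<iota> (Duv - Zuv) * (\<iota> Duv * (eu * kv) - kv * (\<iota> (Duv + Zuv) * eu - \<iota> Zuv * ev))) = 0"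
    by (simp only: X ev_ku_exchange diff_self mult_zero_right diff_zero)
  then have "\<iota> Duv * (eu * kv) - kv * (\<iota> (Duv + Zuv) * eu - \<iota> Zuv * ev) = 0"
    by (rule fps2_map_Duv_Zuv_cancel(1)[OF phi_calg, OF ku_left_cancel])
  then show ?thesis by simp
qed

text \<open>Specialising \<open>v = u - 1\<close> makes \<open>Duv = Zuv\<close>; there the relations for \<open>(j, l) = (-1, 1), (1, -1)\<close>
  express \<open>e\<^sub>-\<^sub>1\<^sub>1\<close> through \<open>e\<^sub>-\<^sub>1\<^sub>0\<close>.\<close>

lemma square_relation: "g + g + cmul1 e e = 0"
proof -
  define atoms1 where "atoms1 = map fps2_subst_v atoms"
  have atoms1_eval:
    "fps2_subst_v ku = ncpoly_eval (fps_map \<phi>) atoms1 [([0], 1)]"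
    "fps2_subst_v kv = ncpoly_eval (fps_map \<phi>) atoms1 [([1], 1)]"
    "fps2_subst_v eu = ncpoly_eval (fps_map \<phi>) atoms1 [([2], 1)]"
    "fps2_subst_v ev = ncpoly_eval (fps_map \<phi>) atoms1 [([3], 1)]"
    "fps2_subst_v gu = ncpoly_eval (fps_map \<phi>) atoms1 [([4], 1)]"
    "fps2_subst_v gv = ncpoly_eval (fps_map \<phi>) atoms1 [([5], 1)]"
    by (subst scal1.ncpoly_eval_atom[symmetric]; simp add: atoms1_def atoms_def)+
  have atoms1_commute: "atoms1 ! 1 * atoms1 ! 0 = atoms1 ! 0 * atoms1 ! 1"
    using arg_cong[OF k_commute, of fps2_subst_v] by (simp add: atoms1_def atoms_def fps2_subst_v_mult)
  have "fps2_subst_v (\<iota> (4 * Zuv * Zuv * Zuv) * (ku * (kv * (gu + gu + eu * eu)))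
      - (\<iota> Zuv * ((rtt_form \<phi> (ku * (kv * gv)) (ku * (kv * gv)) (kv * gv * ku) (kv * (ku * gu))
              - \<iota> (2 * Zuv * Duv) * (kv * gv * ku + (kv * ev * (ku * eu) + kv * (ku * gu))))
            - \<iota> 3 * (rtt_form \<phi> (ku * gu * kv) (ku * gu * kv) (kv * (ku * gu)) (kv * gv * ku)
              - \<iota> (2 * Zuv * Duv) * (kv * gv * ku + (kv * ev * (ku * eu) + kv * (ku * gu)))))
        - \<iota> (4 * Zuv * Zuv) * (kv * ((\<iota> Duv * (ev * ku) - ku * (\<iota> (Duv - Zuv) * ev + \<iota> Zuv * eu)) * eu))))
    = 0"
    unfolding rtt_form_def
    by (simp only: fps2_subst_v_mult fps2_subst_v_add fps2_subst_v_diff fps2_subst_v_uminus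
        fps2_subst_v_fps2_map[OF phi_calg] fps2_subst_v_numeral fps2_subst_v_Duv fps2_subst_v_Zuv,
      simp only: atoms1_eval scal1.ncpoly_eval_const[where as = atoms1] scal1.ncpoly_eval_merge,
      subst scal1.ncpoly_eval_commute01[OF atoms1_commute], rule scal1.ncpoly_eval_zeroI,
      simp only: ncpoly_expand_simps, simp only: ncpoly_word_eq_simps, ((rule conjI | algebra)+)?)
  then have "fps2_subst_v (\<iota> (4 * Zuv * Zuv * Zuv) * (ku * (kv * (gu + gu + eu * eu)))) = 0"
    by (simp add: rtt_form_row ev_ku_exchange)
  then have "fps_map \<phi> 4 * (fps_X * (fps_geom_tail * (fps_X * (fps_geom_tail * (fps_X * (fps_geom_tail
      * (fps2_subst_v ku * (fps2_subst_v kv * fps2_subst_v (gu + gu + eu * eu))))))))) = 0"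
    (is "_ * ?Y = 0")
    by (simp add: fps2_subst_v_mult fps2_subst_v_fps2_map[OF phi_calg] fps2_subst_v_numeral fps2_subst_v_Zuv
        scal1.hom_mult fps_map_X[OF phi_calg] fps_map_geom_tail[OF phi_calg] mult.assoc)
  then have "fps_map \<phi> (fps_const (1/4)) * fps_map \<phi> 4 * ?Y = 0"
    by (simp only: mult.assoc mult_zero_right)
  moreover have "fps_map \<phi> (fps_const (1/4)) * fps_map \<phi> 4 = 1"
    by (simp only: scal1.hom_mult[symmetric] numeral_fps_const fps_const_mult) (simp add: scal1.hom_one)
  ultimately have "?Y = 0"
    by simp
  then have "fps2_subst_v ku * (fps2_subst_v kv * fps2_subst_v (gu + gu + eu * eu)) = 0"
    by (blast dest: fps_X_left_cancel fps_geom_tail_left_cancel)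
  moreover have "1 * fps2_subst_v ku $ 0 = 1" "1 * fps2_subst_v kv $ 0 = 1"
    by (simp_all add: fps2_subst_v_nth_0 k_0)
  ultimately have "fps2_subst_v (gu + gu + eu * eu) = 0"
    by (blast dest: fps_left_cancel)
  moreover have "Abs_fps (a + b) = Abs_fps a + Abs_fps b" for a b :: "nat \<Rightarrow> 'a"
    by (rule fps_ext) simp
  ultimately have "Abs_fps (g + g + cmul1 e e) = 0"
    by (simp add: fps2_subst_v_add fps2_subst_v_mult fps2_subst_v_fps_u Abs_fps_cmul1)
  then have "Abs_fps (g + g + cmul1 e e) $ n = 0" for n
    by simp
  then show ?thesis
    by (simp add: fun_eq_iff)
qed

lemma commutator_eu_ev:
  "\<iota> Duv * (eu * ev - ev * eu) = \<iota> (fps2_const (1/2)) * (\<iota> Zuv * ((eu - ev) * (eu - ev)))"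
proof -
  define T where "T = \<iota> (2 * Duv) * (eu * ev - ev * eu) - \<iota> Zuv * ((eu - ev) * (eu - ev))"
  have cert: "\<iota> (P2uv * (Duv - Zuv) * (Duv + Zuv)) * (ku * (kv * T))
    = - \<iota> (2 * Duv * Zuv) * (rtt_form \<phi> (ku * (kv * gv)) (ku * (kv * gv)) (kv * gv * ku) (kv * (ku * gu))
          - \<iota> (2 * Zuv * Duv) * (kv * gv * ku + (kv * ev * (ku * eu) + kv * (ku * gu))))
      + \<iota> (Duv * (2 * Duv + Zuv))
        * (rtt_form \<phi> (ku * eu * (kv * ev)) (ku * eu * (kv * ev)) (kv * ev * (ku * eu)) (kv * ev * (ku * eu))
          - \<iota> (2 * Zuv * Duv) * (kv * gv * ku + (kv * ev * (ku * eu) + kv * (ku * gu))))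
      + \<iota> P2uv * (- \<iota> ((2 * Duv + Zuv) * (Duv - Zuv))
            * (ku * ((\<iota> Duv * (eu * kv) - kv * (\<iota> (Duv + Zuv) * eu - \<iota> Zuv * ev)) * ev))
          + \<iota> ((2 * Duv + Zuv) * (Duv - Zuv) + 2 * Zuv * Duv)
            * (kv * ((\<iota> Duv * (ev * ku) - ku * (\<iota> (Duv - Zuv) * ev + \<iota> Zuv * eu)) * eu))
          + \<iota> (Zuv * (Duv - Zuv) * Duv) * (ku * (kv * (gv + gv + ev * ev)))
          + \<iota> (Zuv * (Duv + Zuv) * Duv) * (ku * (kv * (gu + gu + eu * eu))))"
    unfolding rtt_form_def T_def
    by (rule eq_iff_diff_eq_0[THEN iffD2], simp only: atoms_reify, subst scal.ncpoly_eval_commute01[OF atoms_commute],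
        rule scal.ncpoly_eval_zeroI, simp only: ncpoly_expand_simps, simp only: ncpoly_word_eq_simps,
        ((rule conjI | algebra)+)?)
  have squares: "gu + gu + eu * eu = 0" "gv + gv + ev * ev = 0"
    using square_relation
    by (simp_all flip: fps_u_add fps_v_add fps_u_cmul1 fps_v_cmul1 add: fps_u_zero fps_v_zero)
  have "\<iota> (P2uv * (Duv - Zuv) * (Duv + Zuv)) * (ku * (kv * T)) = 0"
    using cert by (simp only: rtt_form_row ev_ku_exchange eu_kv_exchange squares diff_self
        mult_zero_left mult_zero_right add_0_left add_0_right minus_zero)
  then have "\<iota> P2uv * (\<iota> (Duv - Zuv) * (\<iota> (Duv + Zuv) * (ku * (kv * T)))) = 0"
    by (simp only: scal.hom_mult mult.assoc)
  then have T: "T = 0"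
    using fps2_map_Duv_Zuv_cancel[OF phi_calg] ku_left_cancel kv_left_cancel by blast
  have "fps2_const (1/2) * (2 * Duv) = Duv"
    by (simp only: mult.assoc[symmetric] mult.commute[of "fps2_const (1/2)" 2]
        two_mult_fps2_const_half mult_1_left)
  then have "\<iota> (fps2_const (1/2)) * T
      = \<iota> Duv * (eu * ev - ev * eu) - \<iota> (fps2_const (1/2)) * (\<iota> Zuv * ((eu - ev) * (eu - ev)))"
    unfolding T_def by (simp only: right_diff_distrib scal.hom_mult[symmetric] mult.assoc[symmetric])
  then show ?thesis using T by simp
qed

end

lemma cmul1_one_left: "cmul1 ser1_one b = (b :: nat \<Rightarrow> 'a::ring_1)"
proof
  fix n
  have "cmul1 ser1_one b n = (\<Sum>p\<le>n. if p = 0 then b n else 0)"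
    unfolding cmul1_def by (rule sum.cong) (auto simp: ser1_one_def)
  then show "cmul1 ser1_one b n = b n" by simp
qed

lemma cmul1_one_right: "cmul1 a ser1_one = (a :: nat \<Rightarrow> 'a::ring_1)"
proof
  fix n
  have "cmul1 a ser1_one n = (\<Sum>p\<le>n. if p = n then a n else 0)"
    unfolding cmul1_def by (rule sum.cong) (auto simp: ser1_one_def)
  then show "cmul1 a ser1_one n = a n" by simp
qed

lemma cmul1_zero_left: "cmul1 0 b = (0 :: nat \<Rightarrow> 'a::ring_1)"
  by (rule ext) (simp add: cmul1_def)

lemma cmul1_zero_right: "cmul1 a 0 = (0 :: nat \<Rightarrow> 'a::ring_1)"
  by (rule ext) (simp add: cmul1_def)

lemma gauss_decomp_row_col:
  assumes "gauss_decomp t f k e"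
  shows "t (-1) (-1) = k (-1)" "t (-1) 0 = cmul1 (k (-1)) (e (-1) 0)" "t (-1) 1 = cmul1 (k (-1)) (e (-1) 1)"
    "t 0 (-1) = cmul1 (f 0 (-1)) (k (-1))" "t 1 (-1) = cmul1 (f 1 (-1)) (k (-1))"
    "k (-1) 0 = 1"
proof -
  have t: "\<And>i j. i \<in> idx \<Longrightarrow> j \<in> idx \<Longrightarrow> t i j = (\<Sum>a\<in>idx. cmul1 (cmul1 (Fmat f i a) (k a)) (Emat e a j))"
    using assms unfolding gauss_decomp_def by blast
  have sum_idx: "(\<Sum>a\<in>idx. h a) = h (-1) + (h 0 + h 1)" for h :: "int \<Rightarrow> nat \<Rightarrow> 'a"
    by (simp add: idx_def)
  show "k (-1) 0 = 1" using assms unfolding gauss_decomp_def idx_def by blast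
  show "t (-1) (-1) = k (-1)" "t (-1) 0 = cmul1 (k (-1)) (e (-1) 0)" "t (-1) 1 = cmul1 (k (-1)) (e (-1) 1)"
    "t 0 (-1) = cmul1 (f 0 (-1)) (k (-1))" "t 1 (-1) = cmul1 (f 1 (-1)) (k (-1))"
    by (simp_all add: t idx_def sum_idx Fmat_def Emat_def cmul1_one_left cmul1_one_right
        cmul1_zero_left cmul1_zero_right zero_fun_def[symmetric])
qed

lemma commutator_grid_of_fps2:
  fixes E :: "nat \<Rightarrow> 'a::ring_1"
  assumes calg: "calg \<phi>"
    and "fps2_map \<phi> Duv * (fps_u E * fps_v E - fps_v E * fps_u E)
      = fps2_const (\<phi> c) * (fps2_map \<phi> Zuv * ((fps_u E - fps_v E) * (fps_u E - fps_v E)))"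
  shows "mul_umv (cmul2 (ser_u E) (ser_v E) - cmul2 (ser_v E) (ser_u E))
    = scal2 \<phi> c (cmul2 (ser_u E - ser_v E) (ser_u E - ser_v E))"
proof (rule fps2_of_grid_inj[of 1])
  have supp: "grid_supported 0 (cmul2 (ser_u E) (ser_v E) - cmul2 (ser_v E) (ser_u E))"
    by (intro grid_supported_diff grid_supported_cmul2)
  show "grid_supported 1 (mul_umv (cmul2 (ser_u E) (ser_v E) - cmul2 (ser_v E) (ser_u E)))"
    using grid_supported_mul_umv[OF supp] by simp
  show "grid_supported 1 (scal2 \<phi> c (cmul2 (ser_u E - ser_v E) (ser_u E - ser_v E)))"
    by (intro grid_supported_scal2 grid_supported_mono[OF grid_supported_cmul2]) simp
  have "fps2_of_grid (0 + 1) (mul_umv (cmul2 (ser_u E) (ser_v E) - cmul2 (ser_v E) (ser_u E)))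
      = (Xv - Xu) * fps2_of_grid 0 (cmul2 (ser_u E) (ser_v E) - cmul2 (ser_v E) (ser_u E))"
    by (rule fps2_of_grid_mul_umv[OF supp])
  also have "\<dots> = fps2_map \<phi> Duv * (fps_u E * fps_v E - fps_v E * fps_u E)"
    by (simp add: fps2_map_Duv[OF calg] fps2_of_grid_diff fps2_of_grid_uv fps2_of_grid_vu)
  also have "\<dots> = fps2_const (\<phi> c) * (fps2_map \<phi> Zuv * ((fps_u E - fps_v E) * (fps_u E - fps_v E)))"
    by (rule assms(2))
  also have "\<dots> = fps2_const (\<phi> c) * ((Xu * Xv) * fps2_of_grid 0 (cmul2 (ser_u E - ser_v E) (ser_u E - ser_v E)))"
    by (simp add: fps2_map_Zuv[OF calg] fps2_of_grid_cmul2 fps2_of_grid_diff fps2_of_grid_ser_u fps2_of_grid_ser_v)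
  also have "(Xu * Xv) * fps2_of_grid 0 (cmul2 (ser_u E - ser_v E) (ser_u E - ser_v E))
      = fps2_of_grid (0 + 1) (cmul2 (ser_u E - ser_v E) (ser_u E - ser_v E))"
    by (rule fps2_of_grid_shift[OF grid_supported_cmul2, symmetric])
  also have "fps2_const (\<phi> c) * fps2_of_grid (0 + 1) (cmul2 (ser_u E - ser_v E) (ser_u E - ser_v E))
      = fps2_of_grid 1 (scal2 \<phi> c (cmul2 (ser_u E - ser_v E) (ser_u E - ser_v E)))"
    by (simp add: fps2_of_grid_scal2)
  finally show "fps2_of_grid 1 (mul_umv (cmul2 (ser_u E) (ser_v E) - cmul2 (ser_v E) (ser_u E)))
      = fps2_of_grid 1 (scal2 \<phi> c (cmul2 (ser_u E - ser_v E) (ser_u E - ser_v E)))"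
    by (simp only: add_0_left)
qed

lemma commutator_e:
  assumes calg: "calg \<phi>" and "yangian_so3 \<phi> t" and gauss: "gauss_decomp t f k e"
  shows "mul_umv (cmul2 (ser_u (e (-1) 0)) (ser_v (e (-1) 0)) - cmul2 (ser_v (e (-1) 0)) (ser_u (e (-1) 0)))
    = scal2 \<phi> (1/2) (cmul2 (ser_u (e (-1) 0) - ser_v (e (-1) 0)) (ser_u (e (-1) 0) - ser_v (e (-1) 0)))"
proof -
  have rtt: "rtt_rel \<phi> t" using assms(2) by (simp add: yangian_so3_def)
  interpret rtt_row \<phi> "t (-1)" "k (-1)" "e (-1) 0" "e (-1) 1"
  proof
    show "calg \<phi>" by (fact calg)
    show "k (-1) 0 = 1" "t (-1) (-1) = k (-1)" "t (-1) 0 = cmul1 (k (-1)) (e (-1) 0)"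
      "t (-1) 1 = cmul1 (k (-1)) (e (-1) 1)"
      by (simp_all add: gauss_decomp_row_col[OF gauss])
    show "rmat_id \<phi> (fps_u (t (-1) j) * fps_v (t (-1) l)) - rmat_P \<phi> (fps_u (t (-1) j) * fps_v (t (-1) l))
      = rmat_id \<phi> (fps_v (t (-1) l) * fps_u (t (-1) j)) - rmat_P \<phi> (fps_v (t (-1) j) * fps_u (t (-1) l))
        + (if l = - j then rmat_Q \<phi> (\<Sum>a\<in>idx. fps_v (t (-1) (- a)) * fps_u (t (-1) a)) else 0)"
      if "j \<in> idx" "l \<in> idx" for j l
      using rtt_rel_fps2[OF calg rtt _ that(1) _ that(2), of "-1" "-1"] by (simp add: idx_def)
  qed
  show ?thesis
    by (rule commutator_grid_of_fps2[OF calg]) (simp add: commutator_eu_ev fps2_map_const[OF calg])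
qed

lemma fps2_op_rmat:
  assumes "calg \<phi>"
  shows "fps2_op (rmat_id \<phi> X) = rmat_id (op \<circ> \<phi>) (fps2_op X)"
    and "fps2_op (rmat_P \<phi> X) = rmat_P (op \<circ> \<phi>) (fps2_op X)"
    and "fps2_op (rmat_Q \<phi> X) = rmat_Q (op \<circ> \<phi>) (fps2_op X)"
  by (simp_all add: rmat_id_def rmat_P_def rmat_Q_def fps2_op_scalar_mult[OF assms] fps2_op_diff)

lemma commutator_f:
  assumes calg: "calg \<phi>" and "yangian_so3 \<phi> t" and gauss: "gauss_decomp t f k e"
  shows "mul_umv (cmul2 (ser_u (f 0 (-1))) (ser_v (f 0 (-1))) - cmul2 (ser_v (f 0 (-1))) (ser_u (f 0 (-1))))
    = scal2 \<phi> (-1/2) (cmul2 (ser_u (f 0 (-1)) - ser_v (f 0 (-1))) (ser_u (f 0 (-1)) - ser_v (f 0 (-1))))"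
proof -
  have rtt: "rtt_rel \<phi> t" using assms(2) by (simp add: yangian_so3_def)
  define c where "c j = op \<circ> t j (-1)" for j
  interpret rtt_row "op \<circ> \<phi>" c "op \<circ> k (-1)" "op \<circ> f 0 (-1)" "op \<circ> f 1 (-1)"
  proof
    show "calg (op \<circ> \<phi>)" by (rule calg_op[OF calg])
    show "(op \<circ> k (-1)) 0 = 1" "c (-1) = op \<circ> k (-1)"
      "c 0 = cmul1 (op \<circ> k (-1)) (op \<circ> f 0 (-1))" "c 1 = cmul1 (op \<circ> k (-1)) (op \<circ> f 1 (-1))"
      by (simp_all add: c_def gauss_decomp_row_col[OF gauss] op_cmul1 op_one)
    fix j l :: int
    assume "j \<in> idx" "l \<in> idx"
    then have "rmat_id \<phi> (fps_u (t j (-1)) * fps_v (t l (-1))) - rmat_P \<phi> (fps_u (t l (-1)) * fps_v (t j (-1)))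
        + (if l = - j then rmat_Q \<phi> (\<Sum>a\<in>idx. fps_u (t a (-1)) * fps_v (t (- a) (-1))) else 0)
      = rmat_id \<phi> (fps_v (t l (-1)) * fps_u (t j (-1))) - rmat_P \<phi> (fps_v (t l (-1)) * fps_u (t j (-1)))"
      using rtt_rel_fps2[OF calg rtt, of j "-1" l "-1"] by (simp add: idx_def)
    then have "fps2_op (rmat_id \<phi> (fps_u (t j (-1)) * fps_v (t l (-1)))
          - rmat_P \<phi> (fps_u (t l (-1)) * fps_v (t j (-1)))
          + (if l = - j then rmat_Q \<phi> (\<Sum>a\<in>idx. fps_u (t a (-1)) * fps_v (t (- a) (-1))) else 0))
      = fps2_op (rmat_id \<phi> (fps_v (t l (-1)) * fps_u (t j (-1))) - rmat_P \<phi> (fps_v (t l (-1)) * fps_u (t j (-1))))"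
      by simp
    then show "rmat_id (op \<circ> \<phi>) (fps_u (c j) * fps_v (c l)) - rmat_P (op \<circ> \<phi>) (fps_u (c j) * fps_v (c l))
      = rmat_id (op \<circ> \<phi>) (fps_v (c l) * fps_u (c j)) - rmat_P (op \<circ> \<phi>) (fps_v (c j) * fps_u (c l))
        + (if l = - j then rmat_Q (op \<circ> \<phi>) (\<Sum>a\<in>idx. fps_v (c (- a)) * fps_u (c a)) else 0)"
      by (simp only: fps2_op_add fps2_op_diff fps2_op_if fps2_op_rmat[OF calg] fps2_op_sum fps2_op_mult
          fps2_op_fps_u fps2_op_fps_v c_def)
  qed
  let ?U = "fps_u (f 0 (-1))" and ?V = "fps_v (f 0 (-1))"
  have "fps2_op (fps2_map \<phi> Duv * (?V * ?U - ?U * ?V))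
      = fps2_op (fps2_map \<phi> (fps2_const (1/2)) * (fps2_map \<phi> Zuv * ((?U - ?V) * (?U - ?V))))"
    using commutator_eu_ev
    by (simp only: fps2_op_scalar_mult[OF calg], simp only: fps2_op_diff fps2_op_mult fps2_op_fps_u fps2_op_fps_v)
  then have "fps2_map \<phi> Duv * (?V * ?U - ?U * ?V)
      = fps2_map \<phi> (fps2_const (1/2)) * (fps2_map \<phi> Zuv * ((?U - ?V) * (?U - ?V)))"
    by (rule fps2_op_inj)
  then have "fps2_map \<phi> Duv * (?U * ?V - ?V * ?U)
      = - (fps2_map \<phi> (fps2_const (1/2)) * (fps2_map \<phi> Zuv * ((?U - ?V) * (?U - ?V))))"
    by (metis minus_diff_eq mult_minus_right)
  moreover have "fps2_const (\<phi> (-1/2)) = - fps2_map \<phi> (fps2_const (1/2))"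
    using calg_uminus[OF calg, of "1/2"] by (simp add: fps2_map_const[OF calg])
  ultimately have "fps2_map \<phi> Duv * (?U * ?V - ?V * ?U)
      = fps2_const (\<phi> (-1/2)) * (fps2_map \<phi> Zuv * ((?U - ?V) * (?U - ?V)))"
    by (simp only: minus_mult_left)
  then show ?thesis
    by (rule commutator_grid_of_fps2[OF calg])
qed

theorem proposition3p7:
  fixes \<phi> :: "complex \<Rightarrow> 'a::ring_1"
    and t :: "int \<Rightarrow> int \<Rightarrow> nat \<Rightarrow> 'a"
    and f e :: "int \<Rightarrow> int \<Rightarrow> nat \<Rightarrow> 'a"
    and k :: "int \<Rightarrow> nat \<Rightarrow> 'a"
  assumes "calg \<phi>"
    and "yangian_so3 \<phi> t"
    and "gauss_decomp t f k e"
  shows "(mul_umv (cmul2 (ser_u (e (-1) 0)) (ser_v (e (-1) 0)) - cmul2 (ser_v (e (-1) 0)) (ser_u (e (-1) 0)))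
           = scal2 \<phi> (1/2) (cmul2 (ser_u (e (-1) 0) - ser_v (e (-1) 0)) (ser_u (e (-1) 0) - ser_v (e (-1) 0))))
         \<and> (mul_umv (cmul2 (ser_u (f 0 (-1))) (ser_v (f 0 (-1))) - cmul2 (ser_v (f 0 (-1))) (ser_u (f 0 (-1))))
           = scal2 \<phi> (-1/2) (cmul2 (ser_u (f 0 (-1)) - ser_v (f 0 (-1))) (ser_u (f 0 (-1)) - ser_v (f 0 (-1)))))"
  using commutator_e[OF assms] commutator_f[OF assms] by blast

end
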